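(* Let $n\ge1$ and let $A$ and $B$ be smooth $\mathbb{R}_{0,m}$-valued functions depending only on $\underline{y}$. The function $$F(X)=\exp(z)A(\underline{y})+\exp(\overline{z})B(\underline{y})$$ is left $n$-monogenic (i.e. $\partial_X^nF=0$) if and only if $\Delta^nA(\underline{y})=0$ and $$B(\underline{y})=\sum_{k=1}^n c_k\,\partial_{\underline{y}}^{2k-1}A(\underline{y}),$$ where the real constants $c_k$ are defined recursively by $$c_1=-\tfrac12,\qquad c_k=-\frac{1}{2^k}\sum_{j=1}^{\lfloor k/2\rfloor}\sum_{i=1}^{j}\binom{k+1}{2j+1}\binom{j}{i}c_{k-i},\quad k\ge2.$$
   Context: Let $m\ge 2$ and let $\mathbb{R}_{0,m}$ be the real Clifford algebra generated by $e_1,\dots,e_m$ with $e_i^2=-1$ and $e_ie_j=-e_je_i$ for $i\neq j$; all products are Clifford products. Identify $(x_0,\dots,x_m)\in\mathbb{R}^{m+1}$ with $X=x_0+\sum_{j=1}^m x_je_j$, and write $z=x_0+x_1e_1$, $\overline{z}=x_0-x_1e_1$, $\underline{y}=\sum_{j=2}^m x_je_j$; $\exp(z)=e^{x_0}(\cos x_1+e_1\sin x_1)$, $\exp(\overline z)=e^{x_0}(\cos x_1-e_1\sin x_1)$. Operators: $\partial_X f=\partial_{x_0}f+\sum_{j=1}^m e_j\partial_{x_j}f$, $\partial_{\underline{y}}f=\sum_{j=2}^m e_j\partial_{x_j}f$; powers denote iterated left application. $\Delta=\sum_{j=2}^m\partial_{x_j}^2=-\partial_{\underline{y}}^2$. 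*)

theory Defs
  imports "HOL-Analysis.Analysis"
begin

text \<open>Real Clifford algebra R_{0,m}: a multivector is a function from blades
(finite sets of indices in {1..m}) to real coefficients; blades not contained
in {1..m} carry coefficient 0.\<close>

type_synonym mvec = "nat set \<Rightarrow> real"

text \<open>Points of R^{m+1}: coordinates x 0, ..., x m (other coordinates are ignored).\<close>
type_synonym point = "nat \<Rightarrow> real"

definition cl_valued :: "nat \<Rightarrow> mvec \<Rightarrow> bool" where
  "cl_valued m u \<longleftrightarrow> (\<forall>C. \<not> C \<subseteq> {1..m} \<longrightarrow> u C = 0)"

text \<open>Sign in e_A e_B = csign A B e_{A symdiff B}, using e_i^2 = -1 and anticommutation.\<close>
definition csign :: "nat set \<Rightarrow> nat set \<Rightarrow> real" where
  "csign A B = (-1) ^ (card {(a, b). a \<in> A \<and> b \<in> B \<and> b < a} + card (A \<inter> B))"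

definition symd :: "nat set \<Rightarrow> nat set \<Rightarrow> nat set" where
  "symd A B = (A - B) \<union> (B - A)"

definition clmul :: "nat \<Rightarrow> mvec \<Rightarrow> mvec \<Rightarrow> mvec" where
  "clmul m u v = (\<lambda>C. if C \<subseteq> {1..m}
      then (\<Sum>A\<in>Pow {1..m}. csign A (symd A C) * u A * v (symd A C)) else 0)"

definition cladd :: "mvec \<Rightarrow> mvec \<Rightarrow> mvec" where
  "cladd u v = (\<lambda>C. u C + v C)"

definition basis :: "nat \<Rightarrow> mvec" where
  "basis j = (\<lambda>C. if C = {j} then 1 else 0)"

definition pdx :: "nat \<Rightarrow> (point \<Rightarrow> mvec) \<Rightarrow> point \<Rightarrow> mvec" where
  "pdx j f x = (\<lambda>C. deriv (\<lambda>t. f (x(j := t)) C) (x j))"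

definition iterpd :: "nat list \<Rightarrow> (point \<Rightarrow> mvec) \<Rightarrow> point \<Rightarrow> mvec" where
  "iterpd js f = foldr pdx js f"

definition smooth_cl :: "nat \<Rightarrow> (point \<Rightarrow> mvec) \<Rightarrow> bool" where
  "smooth_cl m f \<longleftrightarrow> (\<forall>js. set js \<subseteq> {0..m} \<longrightarrow>
      (\<forall>C. continuous_on UNIV (\<lambda>x. iterpd js f x C)) \<and>
      (\<forall>j\<in>{0..m}. \<forall>x C. (\<lambda>t. iterpd js f (x(j := t)) C) differentiable (at (x j))))"

definition depends_only :: "nat set \<Rightarrow> (point \<Rightarrow> mvec) \<Rightarrow> bool" where
  "depends_only S f \<longleftrightarrow> (\<forall>x x'. (\<forall>j\<in>S. x j = x' j) \<longrightarrow> f x = f x')"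

definition dirac :: "nat \<Rightarrow> (point \<Rightarrow> mvec) \<Rightarrow> point \<Rightarrow> mvec" where
  "dirac m f = (\<lambda>x C. pdx 0 f x C + (\<Sum>j\<in>{1..m}. clmul m (basis j) (pdx j f x) C))"

definition dirac_y :: "nat \<Rightarrow> (point \<Rightarrow> mvec) \<Rightarrow> point \<Rightarrow> mvec" where
  "dirac_y m f = (\<lambda>x C. \<Sum>j\<in>{2..m}. clmul m (basis j) (pdx j f x) C)"

definition lap :: "nat \<Rightarrow> (point \<Rightarrow> mvec) \<Rightarrow> point \<Rightarrow> mvec" where
  "lap m f = (\<lambda>x C. \<Sum>j\<in>{2..m}. pdx j (pdx j f) x C)"

text \<open>exp(z) and exp(zbar) with z = x_0 + x_1 e_1.\<close>
definition exp_z :: "point \<Rightarrow> mvec" where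
  "exp_z x = (\<lambda>C. if C = {} then exp (x 0) * cos (x 1)
                 else if C = {1} then exp (x 0) * sin (x 1) else 0)"

definition exp_zbar :: "point \<Rightarrow> mvec" where
  "exp_zbar x = (\<lambda>C. if C = {} then exp (x 0) * cos (x 1)
                 else if C = {1} then - (exp (x 0) * sin (x 1)) else 0)"

text \<open>The constants c_k (k \<ge> 1); the value at 0 is irrelevant.\<close>
function cc :: "nat \<Rightarrow> real" where
  "cc k = (if k \<le> 1 then - 1 / 2
           else - (1 / 2 ^ k) * (\<Sum>j = 1..k div 2. \<Sum>i = 1..j.
                  real ((k + 1) choose (2 * j + 1)) * real (j choose i) * cc (k - i)))"
  by auto
termination
  by (relation "Wellfounded.measure id") auto

end

theory Submission
  imports Defs "HOL-Computational_Algebra.Formal_Power_Series" "HOL-Computational_Algebra.Polynomial"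
    "HOL-Library.Function_Algebras"
begin

(* Since A and B depend only on y, the Dirac operator maps the ansatz exp(z) P + exp(zbar) Q to the
   ansatz with coefficients (d_y Q, d_y P + 2 Q): for j >= 2, e_j anticommutes with e_1 and swaps
   exp(z) and exp(zbar), while d/dx0 + e1 d/dx1 kills exp(z) and doubles exp(zbar). So, with D = d_y,
   the n-th power of the Dirac operator acts as the n-th power M^n of the polynomial matrix
   M = (0, X; X, 2) evaluated at D, and the ansatz vanishes iff M^n(D) (A, B) = 0.
   Since det M^n = (-X^2)^n, this forces D^(2n) A = 0, i.e. Delta^n A = 0 as Delta = -D^2.
   The generating series G = sum c_k t^k satisfies G^2 = 2G + t (the paper's recursion is a
   coefficient identity for this equation), hence g_n = sum c_k X^(2k-1) satisfies
   X g_n^2 = X + 2 g_n modulo X^(2n+1), which makes (1, g_n) an eigenvector of M modulo X^(2n+1) with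
   eigenvalue X g_n. Thus B = g_n(D) A solves the system; it is the only solution because the lower
   right entry of M^n has constant term 2^n, so it is invertible on the kernel of a power of D. *)

unbundle no vec_syntax
unbundle fps_syntax

section \<open>The constants c_k\<close>

(* The coefficients of the power series G with G(0) = 0 and G^2 = 2G + X, i.e. G = 1 - sqrt(1 + X);
   they coincide with cc (cc_eq_cquad). *)

function cquad :: "nat \<Rightarrow> real" where
  "cquad k = (if k = 0 then 0 else if k = 1 then - 1 / 2
              else (\<Sum>i\<in>{1..<k}. cquad i * cquad (k - i)) / 2)"
  by auto
termination by (relation "Wellfounded.measure id") auto

declare cquad.simps [simp del]

lemma cquad_0 [simp]: "cquad 0 = 0"
  by (simp add: cquad.simps)

lemma cquad_1 [simp]: "cquad (Suc 0) = - 1 / 2"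
  by (simp add: cquad.simps)

lemma cquad_recurrence: "k \<ge> 2 \<Longrightarrow> 2 * cquad k = (\<Sum>i\<in>{1..<k}. cquad i * cquad (k - i))"
  by (subst cquad.simps) simp

definition cquad_fps :: "real fps" where
  "cquad_fps = Abs_fps cquad"

lemma cquad_fps_square: "cquad_fps * cquad_fps = 2 * cquad_fps + fps_X"
proof (rule fps_ext)
  fix k
  have "(cquad_fps * cquad_fps) $ k = (\<Sum>i=0..k. cquad i * cquad (k - i))"
    by (simp add: cquad_fps_def fps_mult_nth)
  also have "\<dots> = (2 * cquad_fps + fps_X) $ k"
  proof (cases "k \<ge> 2")
    case True
    have "(\<Sum>i=0..k. cquad i * cquad (k - i)) = (\<Sum>i\<in>{1..<k}. cquad i * cquad (k - i))"
      by (rule sum.mono_neutral_right) (auto simp: Suc_le_eq)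
    then show ?thesis
      using cquad_recurrence[OF True] True by (simp add: cquad_fps_def fps_X_def)
  next
    case False
    then consider "k = 0" | "k = 1" by linarith
    then show ?thesis by cases (simp_all add: cquad_fps_def fps_X_def)
  qed
  finally show "(cquad_fps * cquad_fps) $ k = (2 * cquad_fps + fps_X) $ k" .
qed

definition odd_binom_fps :: "nat \<Rightarrow> real fps" where
  "odd_binom_fps m = (\<Sum>j\<le>m. of_nat (m choose (2 * j + 1)) * (1 + fps_X) ^ j)"

definition even_binom_fps :: "nat \<Rightarrow> real fps" where
  "even_binom_fps m = (\<Sum>j\<le>m. of_nat (m choose (2 * j)) * (1 + fps_X) ^ j)"

lemma odd_binom_fps_upto:
  "m \<le> N \<Longrightarrow> odd_binom_fps m = (\<Sum>j\<le>N. of_nat (m choose (2 * j + 1)) * (1 + fps_X) ^ j)"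
  unfolding odd_binom_fps_def by (rule sum.mono_neutral_left) auto

lemma even_binom_fps_upto:
  "m \<le> N \<Longrightarrow> even_binom_fps m = (\<Sum>j\<le>N. of_nat (m choose (2 * j)) * (1 + fps_X) ^ j)"
  unfolding even_binom_fps_def by (rule sum.mono_neutral_left) auto

lemma odd_binom_fps_Suc: "odd_binom_fps (Suc m) = odd_binom_fps m + even_binom_fps m"
  using odd_binom_fps_upto[of m "Suc m"] even_binom_fps_upto[of m "Suc m"]
  by (simp add: odd_binom_fps_def sum.distrib[symmetric] algebra_simps)

lemma even_binom_fps_Suc: "even_binom_fps (Suc m) = even_binom_fps m + (1 + fps_X) * odd_binom_fps m"
proof -
  let ?Y = "1 + fps_X :: real fps"
  have "even_binom_fps (Suc m) = (\<Sum>j\<le>Suc m. of_nat (Suc m choose (2 * j)) * ?Y ^ j)"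
    by (simp add: even_binom_fps_def)
  also have "\<dots> = 1 + (\<Sum>j\<le>m. of_nat (Suc m choose (2 * Suc j)) * ?Y ^ Suc j)"
    by (subst sum.atMost_Suc_shift) simp
  also have "\<dots> = (1 + (\<Sum>j\<le>m. of_nat (m choose (2 * Suc j)) * ?Y ^ Suc j))
                  + ?Y * (\<Sum>j\<le>m. of_nat (m choose (2 * j + 1)) * ?Y ^ j)"
    by (simp add: sum.distrib[symmetric] sum_distrib_left algebra_simps)
  also have "1 + (\<Sum>j\<le>m. of_nat (m choose (2 * Suc j)) * ?Y ^ Suc j)
      = (\<Sum>j\<le>Suc m. of_nat (m choose (2 * j)) * ?Y ^ j)"
    by (subst sum.atMost_Suc_shift) simp
  also have "\<dots> = even_binom_fps m"
    using even_binom_fps_upto[of m "Suc m"] by simp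
  finally show ?thesis by (simp add: odd_binom_fps_def)
qed

lemma odd_binom_fps_Suc_Suc:
  "odd_binom_fps (Suc (Suc m)) = 2 * odd_binom_fps (Suc m) + fps_X * odd_binom_fps m"
  by (simp add: odd_binom_fps_Suc even_binom_fps_Suc algebra_simps)

lemma cquad_fps_power:
  "cquad_fps ^ Suc k = odd_binom_fps (Suc k) * cquad_fps + fps_X * odd_binom_fps k"
proof (induction k)
  case 0
  then show ?case by (simp add: odd_binom_fps_def)
next
  case (Suc k)
  have "cquad_fps ^ Suc (Suc k)
      = odd_binom_fps (Suc k) * (cquad_fps * cquad_fps) + fps_X * odd_binom_fps k * cquad_fps"
    using Suc by (simp add: algebra_simps)
  then show ?case by (simp add: cquad_fps_square odd_binom_fps_Suc_Suc algebra_simps)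
qed

lemma odd_binom_fps_nth: "odd_binom_fps m $ i = (\<Sum>j\<le>m. real (m choose (2 * j + 1)) * real (j choose i))"
proof -
  have "((1 + fps_X) ^ j :: real fps) = fps_binomial (of_nat j)" for j
    by (simp add: fps_binomial_of_nat)
  then have "((1 + fps_X) ^ j :: real fps) $ i = real (j choose i)" for j
    by (simp add: binomial_gbinomial)
  then show ?thesis by (simp add: odd_binom_fps_def fps_sum_nth)
qed

lemma odd_binom_fps_nth_0: "odd_binom_fps (Suc k) $ 0 = 2 ^ k"
proof (induction k rule: less_induct)
  case (less k)
  show ?case
  proof (cases k)
    case (Suc k')
    then show ?thesis
      using less by (cases k') (simp_all add: odd_binom_fps_Suc_Suc)
  qed (simp add: odd_binom_fps_def)
qed

lemma odd_binom_fps_nth_pred: "k \<ge> 2 \<Longrightarrow> odd_binom_fps k $ (k - 1) = 0"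
  by (auto simp: odd_binom_fps_nth intro!: sum.neutral)

lemma cquad_fps_power_nth: "(cquad_fps ^ Suc k) $ k = 0"
proof -
  have factor: "cquad_fps = fps_X * Abs_fps (\<lambda>i. cquad (Suc i))"
    by (rule fps_ext) (simp add: cquad_fps_def fps_X_mult_nth)
  have "cquad_fps ^ Suc k = fps_X ^ Suc k * Abs_fps (\<lambda>i. cquad (Suc i)) ^ Suc k"
    by (subst factor) (rule power_mult_distrib)
  then show ?thesis by (simp add: fps_X_power_mult_nth del: power_Suc)
qed

(* The paper's recursion for c_k says that the coefficient of X^k in P_(k+1) G vanishes, where
   G = cquad_fps and P_m = odd_binom_fps m; by cquad_fps_power that coefficient is the one of
   G^(k+1) - X P_k, and both terms vanish there. *)

lemma cquad_binomial_recurrence: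
  assumes "k \<ge> 2"
  shows "2 ^ k * cquad k + (\<Sum>i=1..k. odd_binom_fps (Suc k) $ i * cquad (k - i)) = 0"
proof -
  have "odd_binom_fps (Suc k) * cquad_fps = cquad_fps ^ Suc k - fps_X * odd_binom_fps k"
    by (simp only: cquad_fps_power) simp
  then have "(odd_binom_fps (Suc k) * cquad_fps) $ k
      = (cquad_fps ^ Suc k) $ k - (fps_X * odd_binom_fps k) $ k"
    by simp
  also have "\<dots> = 0"
    using assms odd_binom_fps_nth_pred[OF assms]
    by (simp add: cquad_fps_power_nth fps_X_mult_nth del: power_Suc)
  finally have "(\<Sum>i=0..k. odd_binom_fps (Suc k) $ i * cquad (k - i)) = 0"
    by (simp add: fps_mult_nth cquad_fps_def)
  then show ?thesis
    by (simp add: sum.atLeast_Suc_atMost odd_binom_fps_nth_0)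
qed

lemma binomial_double_sum_eq:
  "(\<Sum>j = 1..k div 2. \<Sum>i = 1..j. real ((k + 1) choose (2 * j + 1)) * real (j choose i) * f (k - i))
   = (\<Sum>i = 1..k. odd_binom_fps (Suc k) $ i * f (k - i))"
proof -
  let ?t = "\<lambda>j i. real ((k + 1) choose (2 * j + 1)) * real (j choose i) * f (k - i)"
  have "(\<Sum>j = 1..k div 2. \<Sum>i = 1..j. ?t j i) = (\<Sum>j = 1..k div 2. \<Sum>i = 1..k. ?t j i)"
    by (intro sum.cong refl sum.mono_neutral_left) auto
  also have "\<dots> = (\<Sum>j\<le>Suc k. \<Sum>i = 1..k. ?t j i)"
  proof (rule sum.mono_neutral_left)
    show "\<forall>j\<in>{..Suc k} - {1..k div 2}. (\<Sum>i = 1..k. ?t j i) = 0"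
    proof
      fix j assume j: "j \<in> {..Suc k} - {1..k div 2}"
      show "(\<Sum>i = 1..k. ?t j i) = 0"
      proof (cases "j = 0")
        case False
        then have "k + 1 < 2 * j + 1" using j by auto
        then show ?thesis by (simp add: binomial_eq_0 del: binomial_Suc_Suc)
      qed (auto intro: sum.neutral)
    qed
  qed auto
  also have "\<dots> = (\<Sum>i = 1..k. odd_binom_fps (Suc k) $ i * f (k - i))"
    by (subst sum.swap) (simp only: odd_binom_fps_nth sum_distrib_right Suc_eq_plus1)
  finally show ?thesis .
qed

declare cc.simps [simp del]

lemma cc_eq_cquad: "k \<ge> 1 \<Longrightarrow> cc k = cquad k"
proof (induction k rule: less_induct)
  case (less k)
  show ?case
  proof (cases "k \<ge> 2")
    case True
    have "cc k = - (1 / 2 ^ k) * (\<Sum>j = 1..k div 2. \<Sum>i = 1..j.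
        real ((k + 1) choose (2 * j + 1)) * real (j choose i) * cquad (k - i))"
      using True less.IH by (subst cc.simps) (auto intro!: sum.cong)
    also have "\<dots> = cquad k"
      using cquad_binomial_recurrence[OF True] by (simp only: binomial_double_sum_eq) (simp add: field_simps)
    finally show ?thesis .
  next
    case False
    with less.prems have "k = 1" by linarith
    then show ?thesis by (simp add: cc.simps)
  qed
qed

lemma cc_1: "cc (Suc 0) = - 1 / 2"
  by (simp add: cc_eq_cquad)

lemma cc_recurrence:
  assumes "k \<ge> 2"
  shows "2 * cc k = (\<Sum>i\<in>{1..<k}. cc i * cc (k - i))"
proof -
  have "(\<Sum>i\<in>{1..<k}. cc i * cc (k - i)) = (\<Sum>i\<in>{1..<k}. cquad i * cquad (k - i))"
    by (intro sum.cong) (auto simp: cc_eq_cquad)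
  then show ?thesis
    using assms by (simp add: cc_eq_cquad cquad_recurrence)
qed

section \<open>Polynomial congruences\<close>

abbreviation pX :: "real poly" where
  "pX \<equiv> [:0, 1:]"

definition cc_poly :: "nat \<Rightarrow> real poly" where
  "cc_poly n = (\<Sum>k=1..n. monom (cc k) (k - 1))"

lemma coeff_cc_poly: "coeff (cc_poly n) i = (if i < n then cc (Suc i) else 0)"
proof -
  have "coeff (cc_poly n) i = (\<Sum>k=1..n. if k = Suc i then cc k else 0)"
    unfolding cc_poly_def coeff_sum coeff_monom by (rule sum.cong) auto
  then show ?thesis by simp
qed

(* X * cc_poly n truncates G = cquad_fps, and the congruence is G^2 = 2G + X divided by X. *)

lemma cc_poly_congruence: "pX ^ n dvd 1 + 2 * cc_poly n - pX * cc_poly n ^ 2"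
proof -
  have "coeff (1 + 2 * cc_poly n - pX * cc_poly n ^ 2) j = 0" if "j < n" for j
  proof (cases j)
    case 0
    then show ?thesis using that by (simp add: coeff_cc_poly numeral_poly cc_1)
  next
    case (Suc J)
    have "coeff (pX * cc_poly n ^ 2) j = (\<Sum>i\<le>J. cc (Suc i) * cc (Suc J - i))"
      using that Suc by (auto simp: power2_eq_square coeff_mult coeff_cc_poly Suc_diff_le intro!: sum.cong)
    also have "\<dots> = (\<Sum>i\<in>{1..<Suc j}. cc i * cc (Suc j - i))"
      unfolding Suc One_nat_def sum.atLeast_Suc_lessThan_Suc_shift
      by (simp add: atLeast0LessThan lessThan_Suc_atMost)
    also have "\<dots> = 2 * cc (Suc j)"
      using Suc by (simp add: cc_recurrence)
    finally show ?thesis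
      using that Suc by (simp add: coeff_cc_poly numeral_poly)
  qed
  then have "monom 1 n dvd 1 + 2 * cc_poly n - pX * cc_poly n ^ 2"
    by (simp add: monom_1_dvd_iff')
  then show ?thesis
    by (simp add: monom_altdef)
qed

lemma pcompose_monom: "pcompose (monom c k) q = smult c (q ^ k)"
  by (induction k) (simp_all add: monom_0 monom_Suc pcompose_pCons)

lemma pcompose_X_square_dvd:
  assumes "pX ^ n dvd p"
  shows "pX ^ (2 * n) dvd pcompose p (pX ^ 2)"
proof -
  obtain q where "p = pX ^ n * q" using assms by (rule dvdE)
  then have "pcompose p (pX ^ 2) = pX ^ (2 * n) * pcompose q (pX ^ 2)"
    using pcompose_monom[of 1 n "pX ^ 2"]
    by (simp add: pcompose_mult monom_altdef power_mult)
  then show ?thesis by simp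
qed

definition odd_cc_poly :: "nat \<Rightarrow> real poly" where
  "odd_cc_poly n = (\<Sum>k=1..n. monom (cc k) (2 * k - 1))"

lemma odd_cc_poly_eq: "odd_cc_poly n = pX * pcompose (cc_poly n) (pX ^ 2)"
  unfolding odd_cc_poly_def cc_poly_def pcompose_sum sum_distrib_left
proof (rule sum.cong)
  fix k :: nat assume "k \<in> {1..n}"
  then have "2 * k - 1 = Suc (2 * (k - 1))" by (cases k) auto
  then show "monom (cc k) (2 * k - 1) = pX * pcompose (monom (cc k) (k - 1)) (pX ^ 2)"
    by (simp only: pcompose_monom) (simp add: monom_altdef power_mult)
qed simp

(* By odd_cc_poly_eq, this is the congruence for cc_poly n evaluated at X^2 and multiplied by X. *)

lemma odd_cc_poly_congruence:
  "pX ^ (2 * n + 1) dvd pX + 2 * odd_cc_poly n - pX * odd_cc_poly n ^ 2"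
proof -
  let ?h = "cc_poly n"
  have "pX + 2 * odd_cc_poly n - pX * odd_cc_poly n ^ 2
      = pX * pcompose (1 + 2 * ?h - pX * ?h ^ 2) (pX ^ 2)"
    by (simp add: odd_cc_poly_eq pcompose_add pcompose_diff pcompose_mult pcompose_pCons
        pcompose_1 pcompose_smult numeral_poly power2_eq_square algebra_simps)
  moreover have "pX ^ (2 * n) dvd pcompose (1 + 2 * ?h - pX * ?h ^ 2) (pX ^ 2)"
    by (rule pcompose_X_square_dvd[OF cc_poly_congruence])
  ultimately show ?thesis
    by (metis mult_dvd_mono dvd_refl power_Suc Suc_eq_plus1)
qed

(* (ma k, mb k; mc k, md k) is the k-th power of the polynomial matrix (0, X; X, 2), which describes
   the action of the Dirac operator on the exponential ansatz (see ansatz_step). *)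

fun ma :: "nat \<Rightarrow> real poly" and mb :: "nat \<Rightarrow> real poly"
  and mc :: "nat \<Rightarrow> real poly" and md :: "nat \<Rightarrow> real poly" where
  "ma 0 = 1" | "ma (Suc k) = pX * mc k"
| "mb 0 = 0" | "mb (Suc k) = pX * md k"
| "mc 0 = 0" | "mc (Suc k) = pX * ma k + 2 * mc k"
| "md 0 = 1" | "md (Suc k) = pX * mb k + 2 * md k"

lemma matrix_det: "ma k * md k - mb k * mc k = (- (pX ^ 2)) ^ k"
proof (induction k)
  case (Suc k)
  have "ma (Suc k) * md (Suc k) - mb (Suc k) * mc (Suc k) = - (pX ^ 2) * (ma k * md k - mb k * mc k)"
    by (simp add: algebra_simps power2_eq_square)
  then show ?case using Suc by simp
qed simp

lemma poly_md_0: "poly (md k) 0 = 2 ^ k"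
  by (induction k) simp_all

(* Modulo X^(2n+1), the vector (1, g_n) is an eigenvector of the matrix with eigenvalue X g_n. *)

lemma matrix_power_eigenvector:
  fixes n k :: nat
  defines "g \<equiv> odd_cc_poly n" and "Z \<equiv> pX ^ (2 * n + 1)"
  shows "Z dvd ma k + mb k * g - (pX * g) ^ k \<and> Z dvd mc k + md k * g - (pX * g) ^ k * g"
proof (induction k)
  case (Suc k)
  have "ma (Suc k) + mb (Suc k) * g - (pX * g) ^ Suc k = pX * (mc k + md k * g - (pX * g) ^ k * g)"
    by (simp add: algebra_simps)
  moreover have "mc (Suc k) + md (Suc k) * g - (pX * g) ^ Suc k * g
     = pX * (ma k + mb k * g - (pX * g) ^ k) + 2 * (mc k + md k * g - (pX * g) ^ k * g)
       + (pX * g) ^ k * (pX + 2 * g - pX * g ^ 2)"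
    by (simp add: algebra_simps power2_eq_square)
  moreover have "Z dvd pX + 2 * g - pX * g ^ 2"
    unfolding Z_def g_def by (rule odd_cc_poly_congruence)
  ultimately show ?case
    using Suc by (metis dvd_add dvd_mult)
qed simp

lemma matrix_power_annihilates:
  "pX ^ (2 * n) dvd ma n + mb n * odd_cc_poly n \<and> pX ^ (2 * n) dvd mc n + md n * odd_cc_poly n"
proof -
  let ?g = "odd_cc_poly n"
  have "(pX * ?g) ^ n = pX ^ (2 * n) * pcompose (cc_poly n) (pX ^ 2) ^ n"
    unfolding odd_cc_poly_eq power_mult power_mult_distrib[symmetric] power2_eq_square
    by (simp only: mult.assoc)
  then have eigenvalue: "pX ^ (2 * n) dvd (pX * ?g) ^ n"
    by simp
  have "pX ^ (2 * n) dvd pX ^ (2 * n + 1)"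
    by (rule le_imp_power_dvd) simp
  then have "pX ^ (2 * n) dvd ma n + mb n * ?g - (pX * ?g) ^ n"
    and "pX ^ (2 * n) dvd mc n + md n * ?g - (pX * ?g) ^ n * ?g"
    using matrix_power_eigenvector[of n n] dvd_trans by blast+
  with eigenvalue show ?thesis
    by (metis diff_add_cancel dvd_add dvd_mult2)
qed

section \<open>Polynomials in an endomorphism of a subspace\<close>

locale subspace_endo =
  fixes V :: "'v::real_vector set" and D :: "'v \<Rightarrow> 'v"
  assumes subspace: "subspace V"
    and D_in: "x \<in> V \<Longrightarrow> D x \<in> V"
    and D_add: "x \<in> V \<Longrightarrow> y \<in> V \<Longrightarrow> D (x + y) = D x + D y"
    and D_scaleR: "x \<in> V \<Longrightarrow> D (c *\<^sub>R x) = c *\<^sub>R D x"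
begin

lemma D_0: "D 0 = 0"
  using D_scaleR[OF subspace_0[OF subspace], of 0] by simp

lemma D_sum: "(\<And>i. i \<in> S \<Longrightarrow> f i \<in> V) \<Longrightarrow> D (sum f S) = (\<Sum>i\<in>S. D (f i))"
  by (induction S rule: infinite_finite_induct) (simp_all add: D_0 D_add subspace_sum[OF subspace])

lemma D_power_0: "(D ^^ i) 0 = 0"
  by (induction i) (simp_all add: D_0)

lemma D_power_in: "x \<in> V \<Longrightarrow> (D ^^ i) x \<in> V"
  by (induction i) (simp_all add: D_in)

lemma D_power_add: "x \<in> V \<Longrightarrow> y \<in> V \<Longrightarrow> (D ^^ i) (x + y) = (D ^^ i) x + (D ^^ i) y"
  by (induction i) (simp_all add: D_add D_power_in)

lemma D_power_scaleR: "x \<in> V \<Longrightarrow> (D ^^ i) (c *\<^sub>R x) = c *\<^sub>R (D ^^ i) x"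
  by (induction i) (simp_all add: D_scaleR D_power_in)

definition poly_op :: "real poly \<Rightarrow> 'v \<Rightarrow> 'v" where
  "poly_op p v = (\<Sum>i\<le>degree p. coeff p i *\<^sub>R (D ^^ i) v)"

lemma poly_op_upto: "degree p \<le> N \<Longrightarrow> poly_op p v = (\<Sum>i\<le>N. coeff p i *\<^sub>R (D ^^ i) v)"
  unfolding poly_op_def by (rule sum.mono_neutral_left) (auto simp: coeff_eq_0)

lemma poly_op_in: "v \<in> V \<Longrightarrow> poly_op p v \<in> V"
  unfolding poly_op_def by (intro subspace_sum[OF subspace] subspace_mul[OF subspace] D_power_in)

lemma poly_op_0 [simp]: "poly_op 0 v = 0"
  by (simp add: poly_op_def)

lemma poly_op_1 [simp]: "poly_op 1 v = v"
  by (simp add: poly_op_def)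

lemma poly_op_zero [simp]: "poly_op p 0 = 0"
  by (simp add: poly_op_def D_power_0)

lemma poly_op_add_poly: "poly_op (p + q) v = poly_op p v + poly_op q v"
proof -
  let ?N = "max (degree p) (degree q)"
  have "poly_op (p + q) v = (\<Sum>i\<le>?N. coeff (p + q) i *\<^sub>R (D ^^ i) v)"
    by (rule poly_op_upto) (simp add: degree_add_le)
  also have "\<dots> = poly_op p v + poly_op q v"
    by (simp add: poly_op_upto[of p ?N] poly_op_upto[of q ?N] scaleR_add_left sum.distrib)
  finally show ?thesis .
qed

lemma poly_op_smult: "poly_op (smult c p) v = c *\<^sub>R poly_op p v"
  by (simp add: poly_op_upto[OF degree_smult_le] poly_op_def scaleR_sum_right)

lemma poly_op_minus_poly: "poly_op (- p) v = - poly_op p v"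
  using poly_op_smult[of "-1" p v] by simp

lemma poly_op_diff_poly: "poly_op (p - q) v = poly_op p v - poly_op q v"
  using poly_op_add_poly[of p "- q" v] by (simp add: poly_op_minus_poly)

lemma poly_op_sum_poly: "poly_op (\<Sum>k\<in>S. p k) v = (\<Sum>k\<in>S. poly_op (p k) v)"
  by (induction S rule: infinite_finite_induct) (simp_all add: poly_op_add_poly)

lemma poly_op_monom: "poly_op (monom c i) v = c *\<^sub>R (D ^^ i) v"
proof -
  have "poly_op (monom c i) v = (\<Sum>k\<le>i. coeff (monom c i) k *\<^sub>R (D ^^ k) v)"
    by (rule poly_op_upto) (rule degree_monom_le)
  also have "\<dots> = (\<Sum>k\<le>i. if k = i then c *\<^sub>R (D ^^ k) v else 0)"
    by (rule sum.cong) auto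
  finally show ?thesis by simp
qed

lemma poly_op_add: "v \<in> V \<Longrightarrow> w \<in> V \<Longrightarrow> poly_op p (v + w) = poly_op p v + poly_op p w"
  by (simp add: poly_op_def D_power_add scaleR_add_right sum.distrib)

lemma poly_op_scaleR: "v \<in> V \<Longrightarrow> poly_op p (c *\<^sub>R v) = c *\<^sub>R poly_op p v"
  by (simp add: poly_op_def D_power_scaleR scaleR_sum_right mult.commute)

lemma poly_op_diff: "v \<in> V \<Longrightarrow> w \<in> V \<Longrightarrow> poly_op p (v - w) = poly_op p v - poly_op p w"
  using poly_op_add[of v "- w" p] poly_op_scaleR[of w p "- 1"] subspace_neg[OF subspace, of w] by simp

lemma poly_op_pCons: "v \<in> V \<Longrightarrow> poly_op (pCons a p) v = a *\<^sub>R v + D (poly_op p v)"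
proof -
  assume v: "v \<in> V"
  have "poly_op (pCons a p) v = (\<Sum>i\<le>Suc (degree p). coeff (pCons a p) i *\<^sub>R (D ^^ i) v)"
    by (rule poly_op_upto) (simp add: degree_pCons_le)
  also have "\<dots> = a *\<^sub>R v + (\<Sum>i\<le>degree p. coeff p i *\<^sub>R D ((D ^^ i) v))"
    by (subst sum.atMost_Suc_shift) simp
  also have "(\<Sum>i\<le>degree p. coeff p i *\<^sub>R D ((D ^^ i) v)) = D (poly_op p v)"
    using v by (simp add: poly_op_def D_sum D_scaleR D_power_in subspace_mul[OF subspace])
  finally show ?thesis .
qed

lemma poly_op_X: "v \<in> V \<Longrightarrow> poly_op pX v = D v"
  by (simp add: poly_op_pCons D_0)

lemma poly_op_mult: "v \<in> V \<Longrightarrow> poly_op (p * q) v = poly_op p (poly_op q v)"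
proof (induction p rule: pCons_induct)
  case (pCons a p)
  then show ?case
    by (simp add: poly_op_add_poly poly_op_smult poly_op_pCons poly_op_in)
qed simp

lemma poly_op_commute: "v \<in> V \<Longrightarrow> poly_op p (poly_op q v) = poly_op q (poly_op p v)"
  by (metis poly_op_mult mult.commute)

lemma poly_op_eq_0_imp_eq_0:
  assumes u: "u \<in> V" and "poly_op p u = 0" and "poly p 0 \<noteq> 0" and "poly_op (pX ^ N) u = 0"
  shows "u = 0"
  using assms(4)
proof (induction N)
  case (Suc N)
  obtain c r where p: "p = pCons c r" by (cases p rule: pCons_cases)
  (* w = D^N u satisfies D w = 0, so p(D) w = p(0) w. *)
  define w where "w = poly_op (pX ^ N) u"
  have w: "w \<in> V" using u by (simp add: w_def poly_op_in)
  have "D w = 0"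
    using Suc.prems u w by (simp add: w_def poly_op_mult[symmetric] poly_op_X[symmetric] mult.commute)
  moreover have "poly_op p w = 0"
    using u assms(2) by (simp add: w_def poly_op_commute[of u p])
  moreover have "D (poly_op r w) = poly_op r (D w)"
    using w by (simp add: poly_op_X[symmetric] poly_op_commute poly_op_in D_in)
  ultimately have "c *\<^sub>R w = 0"
    using w p by (simp add: poly_op_pCons poly_op_smult)
  then have "w = 0" using assms(3) p by simp
  then show ?case using Suc.IH w_def by simp
qed simp

lemma poly_op_cramer:
  assumes A: "A \<in> V" and B: "B \<in> V"
    and 1: "poly_op a A + poly_op b B = 0" and 2: "poly_op c A + poly_op d B = 0"
  shows "poly_op (a * d - b * c) A = 0" and "poly_op (a * d - b * c) B = 0"
proof -
  have "poly_op (a * d - b * c) A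
      = poly_op d (poly_op a A + poly_op b B) - poly_op b (poly_op c A + poly_op d B)"
    using A B by (simp add: poly_op_add poly_op_in poly_op_diff_poly poly_op_mult[symmetric] mult.commute)
  then show "poly_op (a * d - b * c) A = 0" using 1 2 by simp
  have "poly_op (a * d - b * c) B
      = poly_op a (poly_op c A + poly_op d B) - poly_op c (poly_op a A + poly_op b B)"
    using A B by (simp add: poly_op_add poly_op_in poly_op_diff_poly poly_op_mult[symmetric] mult.commute)
  then show "poly_op (a * d - b * c) B = 0" using 1 2 by simp
qed

lemma poly_op_minus_X_square_power:
  "poly_op ((- (pX ^ 2)) ^ n) v = (- 1) ^ n *\<^sub>R poly_op (pX ^ (2 * n)) v"
proof -
  have "(- (pX ^ 2)) ^ n = smult ((- 1) ^ n) (pX ^ (2 * n))"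
    by (induction n) (simp_all add: power_mult power2_eq_square)
  then show ?thesis by (simp add: poly_op_smult)
qed

lemma poly_op_minus_X_square:
  assumes v: "v \<in> V"
  shows "poly_op (- (pX ^ 2)) v = - D (D v)"
proof -
  have "poly_op (- (pX ^ 2)) v = - poly_op pX (poly_op pX v)"
    using v by (simp only: poly_op_minus_poly power2_eq_square poly_op_mult)
  then show ?thesis
    using v by (simp add: poly_op_X D_in)
qed

(* The Dirac operator acts in this way on the coefficients (P, Q) of exp(z) P + exp(zbar) Q,
   with D = dirac_y (dirac_ansatz). *)

definition ansatz_step :: "'v \<times> 'v \<Rightarrow> 'v \<times> 'v" where
  "ansatz_step PQ = (D (snd PQ), D (fst PQ) + 2 *\<^sub>R snd PQ)"

lemma ansatz_step_power:
  "P \<in> V \<Longrightarrow> Q \<in> V \<Longrightarrow> (ansatz_step ^^ k) (P, Q)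
     = (poly_op (ma k) P + poly_op (mb k) Q, poly_op (mc k) P + poly_op (md k) Q)"
proof (induction k)
  case (Suc k)
  have "D (poly_op q R) = poly_op (pX * q) R" if "R \<in> V" for q R
    using that by (simp add: poly_op_pCons)
  with Suc show ?case
    by (simp add: ansatz_step_def D_add poly_op_in poly_op_add_poly poly_op_smult poly_op_scaleR
        numeral_poly scaleR_add_right algebra_simps del: mult_pCons_left)
qed simp

lemma ansatz_step_power_in: "P \<in> V \<Longrightarrow> Q \<in> V \<Longrightarrow> (ansatz_step ^^ k) (P, Q) \<in> V \<times> V"
  by (simp add: ansatz_step_power poly_op_in subspace_add[OF subspace])

lemma ansatz_step_power_solution:
  assumes A: "A \<in> V" and "poly_op (pX ^ (2 * n)) A = 0"
  shows "(ansatz_step ^^ n) (A, poly_op (odd_cc_poly n) A) = (0, 0)"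
proof -
  have "poly_op p A = 0" if dvd: "pX ^ (2 * n) dvd p" for p
  proof -
    obtain q where "p = pX ^ (2 * n) * q" using dvd by (rule dvdE)
    then show ?thesis using A assms(2) by (simp add: mult.commute poly_op_mult)
  qed
  then show ?thesis
    using A matrix_power_annihilates[of n]
    by (simp add: ansatz_step_power poly_op_in poly_op_mult[symmetric] poly_op_add_poly[symmetric])
qed

theorem ansatz_step_power_eq_0_iff:
  assumes A: "A \<in> V" and B: "B \<in> V"
  shows "(ansatz_step ^^ n) (A, B) = (0, 0)
    \<longleftrightarrow> poly_op (pX ^ (2 * n)) A = 0 \<and> B = poly_op (odd_cc_poly n) A"
proof
  assume "poly_op (pX ^ (2 * n)) A = 0 \<and> B = poly_op (odd_cc_poly n) A"
  then show "(ansatz_step ^^ n) (A, B) = (0, 0)"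
    using ansatz_step_power_solution A by auto
next
  assume "(ansatz_step ^^ n) (A, B) = (0, 0)"
  then have 1: "poly_op (ma n) A + poly_op (mb n) B = 0"
    and 2: "poly_op (mc n) A + poly_op (md n) B = 0"
    using A B by (simp_all add: ansatz_step_power)
  have A0: "poly_op (pX ^ (2 * n)) A = 0" and B0: "poly_op (pX ^ (2 * n)) B = 0"
    using poly_op_cramer[OF A B 1 2] by (simp_all add: matrix_det poly_op_minus_X_square_power)
  define u where "u = B - poly_op (odd_cc_poly n) A"
  have u: "u \<in> V"
    using A B by (simp add: u_def subspace_diff[OF subspace] poly_op_in)
  have "poly_op (mc n) A + poly_op (md n) (poly_op (odd_cc_poly n) A) = 0"
    using ansatz_step_power_solution[OF A A0] A by (simp add: ansatz_step_power poly_op_in)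
  with 2 have "poly_op (md n) B = poly_op (md n) (poly_op (odd_cc_poly n) A)"
    by (metis add_left_cancel)
  then have "poly_op (md n) u = 0"
    using A B by (simp add: u_def poly_op_diff poly_op_in)
  moreover have "poly_op (pX ^ (2 * n)) u = 0"
    using A B A0 B0 by (simp add: u_def poly_op_diff poly_op_in poly_op_commute[of A])
  ultimately have "u = 0"
    using poly_op_eq_0_imp_eq_0[OF u] by (simp add: poly_md_0)
  with A0 show "poly_op (pX ^ (2 * n)) A = 0 \<and> B = poly_op (odd_cc_poly n) A"
    by (simp add: u_def)
qed

end

section \<open>Clifford multiplication\<close>

instantiation "fun" :: (type, real_vector) real_vector
begin

definition scaleR_fun :: "real \<Rightarrow> ('a \<Rightarrow> 'b) \<Rightarrow> 'a \<Rightarrow> 'b" where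
  "scaleR_fun c f = (\<lambda>x. c *\<^sub>R f x)"

instance
  by standard (simp_all add: scaleR_fun_def fun_eq_iff scaleR_add_right scaleR_add_left)

end

lemma scaleR_fun_apply [simp]: "(c *\<^sub>R f) x = c *\<^sub>R f x"
  by (simp add: scaleR_fun_def)

lemma sum_fun_apply: "(\<Sum>i\<in>S. f i) x = (\<Sum>i\<in>S. f i x)"
  by (induction S rule: infinite_finite_induct) auto

lemma symd_empty [simp]: "symd {} C = C"
  by (auto simp: symd_def)

lemma symd_symd [simp]: "symd {j} (symd {j} C) = C"
  by (auto simp: symd_def)

lemma symd_commute: "symd {i} (symd {j} C) = symd {j} (symd {i} C)"
  by (auto simp: symd_def)

lemma symd_subset: "C \<subseteq> {1..m} \<Longrightarrow> j \<in> {1..m} \<Longrightarrow> symd {j} C \<subseteq> {1..m}"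
  by (auto simp: symd_def)

lemma csign_empty [simp]: "csign {} B = 1"
  by (simp add: csign_def)

definition basis_sign :: "nat \<Rightarrow> nat set \<Rightarrow> real" where
  "basis_sign j C = (- 1) ^ (card {b\<in>C. b < j} + (if j \<in> C then 0 else 1))"

lemma basis_sign_cases: "basis_sign j C = 1 \<or> basis_sign j C = - 1"
  unfolding basis_sign_def by (metis minus_one_power_iff)

lemma csign_singleton_symd: "csign {j} (symd {j} C) = basis_sign j C"
proof -
  have "{(a, b). a \<in> {j} \<and> b \<in> symd {j} C \<and> b < a} = (\<lambda>b. (j, b)) ` {b\<in>C. b < j}"
    by (auto simp: symd_def)
  moreover have "card ((\<lambda>b. (j, b)) ` {b\<in>C. b < j}) = card {b\<in>C. b < j}"
    by (rule card_image) (auto simp: inj_on_def)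
  moreover have "card ({j} \<inter> symd {j} C) = (if j \<in> C then 0 else 1)"
    by (auto simp: symd_def)
  ultimately show ?thesis by (simp add: csign_def basis_sign_def)
qed

lemma basis_sign_square: "basis_sign j C * basis_sign j C = 1"
  using basis_sign_cases[of j C] by auto

lemma basis_sign_symd_same: "basis_sign j (symd {j} C) = - basis_sign j C"
proof -
  have "{b \<in> symd {j} C. b < j} = {b\<in>C. b < j}" by (auto simp: symd_def)
  moreover have "j \<in> symd {j} C \<longleftrightarrow> j \<notin> C" by (auto simp: symd_def)
  ultimately show ?thesis by (simp add: basis_sign_def)
qed

lemma basis_sign_symd_other:
  assumes "i \<noteq> j"
  shows "basis_sign j (symd {i} C) = (if i < j then - basis_sign j C else basis_sign j C)"
proof -
  have mem: "j \<in> symd {i} C \<longleftrightarrow> j \<in> C" using assms by (auto simp: symd_def)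
  let ?S = "{b\<in>C. b < j}"
  have fin: "finite ?S" by (rule finite_subset[of _ "{..<j}"]) auto
  consider "\<not> i < j" | "i < j" "i \<in> C" | "i < j" "i \<notin> C" by blast
  then show ?thesis
  proof cases
    case 1
    then have "{b \<in> symd {i} C. b < j} = ?S" by (auto simp: symd_def)
    then show ?thesis using 1 mem by (simp add: basis_sign_def)
  next
    case 2
    then have "{b \<in> symd {i} C. b < j} = ?S - {i}" by (auto simp: symd_def)
    moreover obtain k where "card ?S = Suc k"
      using 2 fin by (metis (no_types, lifting) card_0_eq empty_iff mem_Collect_eq not0_implies_Suc)
    ultimately show ?thesis using 2 mem by (simp add: basis_sign_def)
  next
    case 3
    then have "{b \<in> symd {i} C. b < j} = insert i ?S" by (auto simp: symd_def)
    then show ?thesis using 3 mem fin by (simp add: basis_sign_def)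
  qed
qed

lemma clmul_basis:
  assumes "j \<in> {1..m}"
  shows "clmul m (basis j) u C
    = (if C \<subseteq> {1..m} then basis_sign j C * u (symd {j} C) else 0)"
proof -
  have "(\<Sum>A\<in>Pow {1..m}. csign A (symd A C) * basis j A * u (symd A C))
      = (\<Sum>A\<in>Pow {1..m}. if A = {j} then basis_sign j C * u (symd {j} C) else 0)"
    by (rule sum.cong) (auto simp: basis_def csign_singleton_symd)
  then show ?thesis using assms by (simp add: clmul_def)
qed

definition cplx_mvec :: "real \<Rightarrow> real \<Rightarrow> mvec" where
  "cplx_mvec a b = (\<lambda>C. if C = {} then a else if C = {1} then b else 0)"

lemma exp_z_eq: "exp_z x = cplx_mvec (exp (x 0) * cos (x 1)) (exp (x 0) * sin (x 1))"
  unfolding exp_z_def cplx_mvec_def by (rule refl)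

lemma exp_zbar_eq: "exp_zbar x = cplx_mvec (exp (x 0) * cos (x 1)) (- (exp (x 0) * sin (x 1)))"
  unfolding exp_zbar_def cplx_mvec_def by (rule refl)

lemma clmul_cplx_mvec:
  assumes "1 \<le> m"
  shows "clmul m (cplx_mvec a b) u C
    = (if C \<subseteq> {1..m} then a * u C + b * basis_sign 1 C * u (symd {1} C) else 0)"
proof -
  have "(\<Sum>A\<in>Pow {1..m}. csign A (symd A C) * cplx_mvec a b A * u (symd A C))
      = (\<Sum>A\<in>Pow {1..m}. (if A = {} then a * u C else 0)
           + (if A = {1} then b * basis_sign 1 C * u (symd {1} C) else 0))"
    by (rule sum.cong) (auto simp: cplx_mvec_def csign_singleton_symd)
  then show ?thesis using assms by (simp add: clmul_def sum.distrib)
qed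

lemma clmul_basis_basis_same:
  assumes "j \<in> {1..m}" "C \<subseteq> {1..m}"
  shows "clmul m (basis j) (clmul m (basis j) u) C = - u C"
  using assms symd_subset[OF assms(2,1)] basis_sign_square[of j C]
  by (simp add: clmul_basis basis_sign_symd_same)

lemma clmul_basis_basis_anticommute:
  assumes "i \<in> {1..m}" "j \<in> {1..m}" "i \<noteq> j"
  shows "clmul m (basis i) (clmul m (basis j) u) C = - clmul m (basis j) (clmul m (basis i) u) C"
proof (cases "C \<subseteq> {1..m}")
  case True
  with assms have "symd {i} C \<subseteq> {1..m}" "symd {j} C \<subseteq> {1..m}"
    by (auto simp: symd_def)
  with True assms show ?thesis
    by (cases "i < j") (auto simp: clmul_basis symd_commute basis_sign_symd_other)
qed (use assms in \<open>simp add: clmul_basis\<close>)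

lemma clmul_basis_cplx_mvec:
  assumes "j \<in> {2..m}"
  shows "clmul m (basis j) (clmul m (cplx_mvec a b) u) C
    = clmul m (cplx_mvec a (- b)) (clmul m (basis j) u) C"
proof (cases "C \<subseteq> {1..m}")
  case True
  with assms have "symd {1} C \<subseteq> {1..m}" "symd {j} C \<subseteq> {1..m}"
    by (auto simp: symd_def)
  with True assms show ?thesis
    by (simp add: clmul_basis clmul_cplx_mvec symd_commute basis_sign_symd_other algebra_simps)
qed (use assms in \<open>simp add: clmul_basis clmul_cplx_mvec\<close>)

lemma clmul_add_right: "clmul m w (u + v) = clmul m w u + clmul m w v"
  by (auto simp: clmul_def fun_eq_iff sum.distrib algebra_simps)

lemma clmul_scaleR_right: "clmul m w (c *\<^sub>R u) = c *\<^sub>R clmul m w u"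
  by (auto simp: clmul_def fun_eq_iff sum_distrib_left algebra_simps)

lemma clmul_sum_right: "clmul m w (\<Sum>j\<in>S. f j) = (\<Sum>j\<in>S. clmul m w (f j))"
proof (induction S rule: infinite_finite_induct)
  case (insert j S)
  then show ?case by (simp only: sum.insert[OF insert.hyps] clmul_add_right)
qed (simp_all add: clmul_def fun_eq_iff)

section \<open>Smooth functions\<close>

lemma iterpd_Nil [simp]: "iterpd [] f = f"
  by (simp add: iterpd_def)

lemma iterpd_Cons: "iterpd (j # js) f = pdx j (iterpd js f)"
  by (simp add: iterpd_def)

lemma iterpd_snoc: "iterpd (js @ [j]) f = iterpd js (pdx j f)"
  by (simp add: iterpd_def)

lemma smooth_cl_differentiable:
  "smooth_cl m F \<Longrightarrow> set js \<subseteq> {0..m} \<Longrightarrow> j \<in> {0..m} \<Longrightarrow>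
   (\<lambda>t. iterpd js F (x(j := t)) C) differentiable (at (x j))"
  unfolding smooth_cl_def by blast

lemma smooth_cl_continuous:
  "smooth_cl m F \<Longrightarrow> set js \<subseteq> {0..m} \<Longrightarrow> continuous_on UNIV (\<lambda>x. iterpd js F x C)"
  unfolding smooth_cl_def by blast

lemma deriv_sum_cmult:
  fixes f :: "'i \<Rightarrow> real \<Rightarrow> real" and a :: "'i \<Rightarrow> real"
  assumes "finite I" "\<forall>i\<in>I. (\<lambda>t. f i t) differentiable (at s)"
  shows "deriv (\<lambda>t. \<Sum>i\<in>I. a i * f i t) s = (\<Sum>i\<in>I. a i * deriv (f i) s)"
proof -
  have "((\<lambda>t. \<Sum>i\<in>I. a i * f i t) has_real_derivative (\<Sum>i\<in>I. a i * deriv (f i) s)) (at s)"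
  proof (rule DERIV_sum)
    fix i assume "i \<in> I"
    then have "(f i has_real_derivative deriv (f i) s) (at s)"
      using assms(2) DERIV_deriv_iff_real_differentiable by blast
    then show "((\<lambda>t. a i * f i t) has_real_derivative a i * deriv (f i) s) (at s)"
      by (rule DERIV_cmult)
  qed
  then show ?thesis by (rule DERIV_imp_deriv)
qed

lemma iterpd_lincomb:
  assumes fin: "finite I" and sm: "\<forall>i\<in>I. smooth_cl m (F i)" and js: "set js \<subseteq> {0..m}"
  shows "iterpd js (\<lambda>x C. \<Sum>i\<in>I. a i C * F i x (\<sigma> i C))
       = (\<lambda>x C. \<Sum>i\<in>I. a i C * iterpd js (F i) x (\<sigma> i C))"
  using js
proof (induction js)
  case Nil then show ?case by simp
next
  case (Cons j js)
  then have j: "j \<in> {0..m}" and js': "set js \<subseteq> {0..m}" by auto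
  have "iterpd (j # js) (\<lambda>x C. \<Sum>i\<in>I. a i C * F i x (\<sigma> i C))
      = pdx j (\<lambda>x C. \<Sum>i\<in>I. a i C * iterpd js (F i) x (\<sigma> i C))"
    using Cons js' by (simp add: iterpd_Cons)
  also have "\<dots> = (\<lambda>x C. \<Sum>i\<in>I. a i C * iterpd (j # js) (F i) x (\<sigma> i C))"
  proof (intro ext)
    fix x C
    have "pdx j (\<lambda>x C. \<Sum>i\<in>I. a i C * iterpd js (F i) x (\<sigma> i C)) x C
       = deriv (\<lambda>t. \<Sum>i\<in>I. a i C * iterpd js (F i) (x(j := t)) (\<sigma> i C)) (x j)"
      by (simp add: pdx_def)
    also have "\<dots> = (\<Sum>i\<in>I. a i C * deriv (\<lambda>t. iterpd js (F i) (x(j := t)) (\<sigma> i C)) (x j))"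
      by (rule deriv_sum_cmult[OF fin]) (use sm js' j smooth_cl_differentiable in blast)
    also have "\<dots> = (\<Sum>i\<in>I. a i C * iterpd (j # js) (F i) x (\<sigma> i C))"
      by (simp add: iterpd_Cons pdx_def)
    finally show "pdx j (\<lambda>x C. \<Sum>i\<in>I. a i C * iterpd js (F i) x (\<sigma> i C)) x C
       = (\<Sum>i\<in>I. a i C * iterpd (j # js) (F i) x (\<sigma> i C))" .
  qed
  finally show ?case .
qed

lemma smooth_cl_lincomb:
  assumes fin: "finite I" and sm: "\<forall>i\<in>I. smooth_cl m (F i)"
  shows "smooth_cl m (\<lambda>x C. \<Sum>i\<in>I. a i C * F i x (\<sigma> i C))"
  unfolding smooth_cl_def
proof (intro allI impI conjI ballI)
  fix js :: "nat list" and C assume js: "set js \<subseteq> {0..m}"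
  show "continuous_on UNIV (\<lambda>x. iterpd js (\<lambda>x C. \<Sum>i\<in>I. a i C * F i x (\<sigma> i C)) x C)"
    unfolding iterpd_lincomb[OF fin sm js]
    by (intro continuous_on_sum continuous_on_mult continuous_on_const)
      (use sm js smooth_cl_continuous in blast)
next
  fix js :: "nat list" and j x C assume js: "set js \<subseteq> {0..m}" and j: "j \<in> {0..m}"
  show "(\<lambda>t. iterpd js (\<lambda>x C. \<Sum>i\<in>I. a i C * F i x (\<sigma> i C)) (x(j := t)) C) differentiable at (x j)"
    unfolding iterpd_lincomb[OF fin sm js]
    by (intro differentiable_sum[OF fin] ballI differentiable_mult differentiable_const)
      (use sm js j smooth_cl_differentiable in blast)
qed

lemma smooth_cl_pdx: "smooth_cl m F \<Longrightarrow> j \<in> {0..m} \<Longrightarrow> smooth_cl m (pdx j F)"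
proof -
  assume F: "smooth_cl m F" and j: "j \<in> {0..m}"
  show ?thesis unfolding smooth_cl_def
  proof (intro allI impI conjI ballI)
    fix js :: "nat list" and C assume js: "set js \<subseteq> {0..m}"
    have js': "set (js @ [j]) \<subseteq> {0..m}" using js j by simp
    show "continuous_on UNIV (\<lambda>x. iterpd js (pdx j F) x C)"
      using smooth_cl_continuous[OF F js', of C] by (simp only: iterpd_snoc)
  next
    fix js :: "nat list" and i x C assume js: "set js \<subseteq> {0..m}" and i: "i \<in> {0..m}"
    have js': "set (js @ [j]) \<subseteq> {0..m}" using js j by simp
    show "(\<lambda>t. iterpd js (pdx j F) (x(i := t)) C) differentiable at (x i)"
      using smooth_cl_differentiable[OF F js' i, of x C] by (simp only: iterpd_snoc)
  qed
qed

lemma smooth_cl_add: "smooth_cl m F \<Longrightarrow> smooth_cl m G \<Longrightarrow> smooth_cl m (F + G)"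
proof -
  assume F: "smooth_cl m F" and G: "smooth_cl m G"
  have "F + G = (\<lambda>x C. \<Sum>i\<in>{0::nat, 1}. 1 * (if i = 0 then F else G) x C)"
    by (simp add: fun_eq_iff)
  moreover have "smooth_cl m (\<lambda>x C. \<Sum>i\<in>{0::nat, 1}. 1 * (if i = 0 then F else G) x C)"
    by (rule smooth_cl_lincomb) (use F G in auto)
  ultimately show ?thesis by simp
qed

lemma smooth_cl_scaleR: "smooth_cl m F \<Longrightarrow> smooth_cl m (c *\<^sub>R F)"
proof -
  assume F: "smooth_cl m F"
  have "c *\<^sub>R F = (\<lambda>x C. \<Sum>i\<in>{0::nat}. c * F x C)"
    by (simp add: fun_eq_iff)
  moreover have "smooth_cl m (\<lambda>x C. \<Sum>i\<in>{0::nat}. c * F x C)"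
    by (rule smooth_cl_lincomb) (use F in auto)
  ultimately show ?thesis by simp
qed

lemma smooth_cl_zero: "smooth_cl m 0"
proof -
  have "(0 :: point \<Rightarrow> mvec) = (\<lambda>x C. \<Sum>i\<in>({}::nat set). 1 * (0 :: point \<Rightarrow> mvec) x C)"
    by (simp add: fun_eq_iff)
  moreover have "smooth_cl m (\<lambda>x C. \<Sum>i\<in>({}::nat set). 1 * (0 :: point \<Rightarrow> mvec) x C)"
    by (rule smooth_cl_lincomb) auto
  ultimately show ?thesis by simp
qed

lemma pdx_add:
  "smooth_cl m F \<Longrightarrow> smooth_cl m G \<Longrightarrow> j \<in> {0..m} \<Longrightarrow> pdx j (F + G) = pdx j F + pdx j G"
proof -
  assume F: "smooth_cl m F" and G: "smooth_cl m G" and j: "j \<in> {0..m}"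
  have "F + G = (\<lambda>x C. \<Sum>i\<in>{0::nat, 1}. 1 * (if i = 0 then F else G) x C)"
    by (simp add: fun_eq_iff)
  then have "pdx j (F + G) = iterpd [j] (\<lambda>x C. \<Sum>i\<in>{0::nat, 1}. 1 * (if i = 0 then F else G) x C)"
    by (simp add: iterpd_Cons)
  also have "\<dots> = (\<lambda>x C. \<Sum>i\<in>{0::nat, 1}. 1 * iterpd [j] (if i = 0 then F else G) x C)"
    by (rule iterpd_lincomb) (use F G j in auto)
  finally show ?thesis by (simp add: fun_eq_iff iterpd_Cons)
qed

lemma pdx_scaleR: "smooth_cl m F \<Longrightarrow> j \<in> {0..m} \<Longrightarrow> pdx j (c *\<^sub>R F) = c *\<^sub>R pdx j F"
proof -
  assume F: "smooth_cl m F" and j: "j \<in> {0..m}"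
  have "c *\<^sub>R F = (\<lambda>x C. \<Sum>i\<in>{0::nat}. c * F x C)"
    by (simp add: fun_eq_iff)
  then have "pdx j (c *\<^sub>R F) = iterpd [j] (\<lambda>x C. \<Sum>i\<in>{0::nat}. c * F x C)"
    by (simp add: iterpd_Cons)
  also have "\<dots> = (\<lambda>x C. \<Sum>i\<in>{0::nat}. c * iterpd [j] F x C)"
    by (rule iterpd_lincomb) (use F j in auto)
  finally show ?thesis by (simp add: fun_eq_iff iterpd_Cons)
qed

lemma depends_only_add: "depends_only S F \<Longrightarrow> depends_only S G \<Longrightarrow> depends_only S (F + G)"
  unfolding depends_only_def by (metis plus_fun_apply)

lemma depends_only_scaleR: "depends_only S F \<Longrightarrow> depends_only S (c *\<^sub>R F)"
  by (simp add: depends_only_def)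

lemma depends_only_upd: "depends_only S F \<Longrightarrow> j \<notin> S \<Longrightarrow> F (x(j := t)) = F x"
  unfolding depends_only_def by auto

lemma depends_only_pdx: "depends_only S F \<Longrightarrow> j \<in> S \<Longrightarrow> depends_only S (pdx j F)"
  unfolding depends_only_def pdx_def
proof (intro allI impI)
  fix x x' :: point
  assume F: "\<forall>x x'. (\<forall>j\<in>S. x j = x' j) \<longrightarrow> F x = F x'" and j: "j \<in> S"
    and xx': "\<forall>j\<in>S. x j = x' j"
  then have "F (x(j := t)) = F (x'(j := t))" for t by auto
  with j xx' show "(\<lambda>C. deriv (\<lambda>t. F (x(j := t)) C) (x j))
      = (\<lambda>C. deriv (\<lambda>t. F (x'(j := t)) C) (x' j))"
    by simp
qed

(* Two applications of the mean value theorem to the mixed second difference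
   f(s0+h, t0+h) - f(s0+h, t0) - f(s0, t0+h) + f(s0, t0), in either order. *)

lemma mixed_difference_mvt:
  fixes f f1 f2 f12 f21 :: "real \<Rightarrow> real \<Rightarrow> real"
  assumes f1: "\<And>s t. ((\<lambda>s. f s t) has_real_derivative f1 s t) (at s)"
      and f2: "\<And>s t. ((\<lambda>t. f s t) has_real_derivative f2 s t) (at t)"
      and f12: "\<And>s t. ((\<lambda>t. f1 s t) has_real_derivative f12 s t) (at t)"
      and f21: "\<And>s t. ((\<lambda>s. f2 s t) has_real_derivative f21 s t) (at s)"
      and h: "h > 0"
  obtains \<xi> \<eta> \<xi>' \<eta>'
  where "\<bar>\<xi> - s0\<bar> < h" "\<bar>\<eta> - t0\<bar> < h" "\<bar>\<xi>' - s0\<bar> < h" "\<bar>\<eta>' - t0\<bar> < h"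
    and "f12 \<xi> \<eta> = f21 \<xi>' \<eta>'"
proof -
  define \<Delta> where "\<Delta> = f (s0 + h) (t0 + h) - f (s0 + h) t0 - f s0 (t0 + h) + f s0 t0"
  have der1: "\<And>x. s0 \<le> x \<Longrightarrow> x \<le> s0 + h \<Longrightarrow>
      ((\<lambda>s. f s (t0 + h) - f s t0) has_real_derivative (f1 x (t0 + h) - f1 x t0)) (at x)"
    by (intro DERIV_diff f1)
  have der2: "\<And>x. t0 \<le> x \<Longrightarrow> x \<le> t0 + h \<Longrightarrow>
      ((\<lambda>t. f (s0 + h) t - f s0 t) has_real_derivative (f2 (s0 + h) x - f2 s0 x)) (at x)"
    by (intro DERIV_diff f2)
  obtain \<xi> where \<xi>: "s0 < \<xi>" "\<xi> < s0 + h"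
    and e1: "(f (s0 + h) (t0 + h) - f (s0 + h) t0) - (f s0 (t0 + h) - f s0 t0)
             = (s0 + h - s0) * (f1 \<xi> (t0 + h) - f1 \<xi> t0)"
    using MVT2[of s0 "s0 + h" _ "\<lambda>s. f1 s (t0 + h) - f1 s t0", OF _ der1] h by auto
  obtain \<eta> where \<eta>: "t0 < \<eta>" "\<eta> < t0 + h"
    and e2: "f1 \<xi> (t0 + h) - f1 \<xi> t0 = (t0 + h - t0) * f12 \<xi> \<eta>"
    using MVT2[of t0 "t0 + h" "\<lambda>t. f1 \<xi> t" "\<lambda>t. f12 \<xi> t"] h f12 by auto
  obtain \<eta>' where \<eta>': "t0 < \<eta>'" "\<eta>' < t0 + h"
    and e3: "(f (s0 + h) (t0 + h) - f s0 (t0 + h)) - (f (s0 + h) t0 - f s0 t0)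
             = (t0 + h - t0) * (f2 (s0 + h) \<eta>' - f2 s0 \<eta>')"
    using MVT2[of t0 "t0 + h" _ "\<lambda>t. f2 (s0 + h) t - f2 s0 t", OF _ der2] h by auto
  obtain \<xi>' where \<xi>': "s0 < \<xi>'" "\<xi>' < s0 + h"
    and e4: "f2 (s0 + h) \<eta>' - f2 s0 \<eta>' = (s0 + h - s0) * f21 \<xi>' \<eta>'"
    using MVT2[of s0 "s0 + h" "\<lambda>s. f2 s \<eta>'" "\<lambda>s. f21 s \<eta>'"] h f21 by auto
  have "\<Delta> = h * (h * f12 \<xi> \<eta>)" using e1 e2 by (simp add: \<Delta>_def algebra_simps)
  moreover have "\<Delta> = h * (h * f21 \<xi>' \<eta>')" using e3 e4 by (simp add: \<Delta>_def algebra_simps)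
  ultimately have "f12 \<xi> \<eta> = f21 \<xi>' \<eta>'" using h by simp
  with \<xi> \<eta> \<xi>' \<eta>' show ?thesis by (intro that[of \<xi> \<eta> \<xi>' \<eta>']) auto
qed

lemma continuous_on_plane_eps_delta:
  fixes g :: "real \<Rightarrow> real \<Rightarrow> real"
  assumes "continuous_on UNIV (\<lambda>p. g (fst p) (snd p))" and "e > 0"
  shows "\<exists>d>0. \<forall>s t. \<bar>s - s0\<bar> < d \<and> \<bar>t - t0\<bar> < d \<longrightarrow> \<bar>g s t - g s0 t0\<bar> < e"
proof -
  have "isCont (\<lambda>p. g (fst p) (snd p)) (s0, t0)"
    using assms(1) continuous_on_eq_continuous_at by blast
  then obtain d where d: "d > 0"
    "\<And>p. dist p (s0, t0) < d \<Longrightarrow> dist (g (fst p) (snd p)) (g s0 t0) < e"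
    using assms(2) unfolding continuous_at_eps_delta by fastforce
  have "dist (s, t) (s0, t0) < d" if "\<bar>s - s0\<bar> < d / 2" "\<bar>t - t0\<bar> < d / 2" for s t
  proof -
    have "dist (s, t) (s0, t0) \<le> \<bar>s - s0\<bar> + \<bar>t - t0\<bar>"
      using sqrt_sum_squares_le_sum_abs[of "s - s0" "t - t0"]
      by (simp add: dist_Pair_Pair dist_real_def)
    with that show ?thesis by linarith
  qed
  with d show ?thesis
    by (intro exI[of _ "d / 2"]) (auto simp: dist_real_def)
qed

lemma mixed_partials_eq:
  fixes f f1 f2 f12 f21 :: "real \<Rightarrow> real \<Rightarrow> real"
  assumes f1: "\<And>s t. ((\<lambda>s. f s t) has_real_derivative f1 s t) (at s)"
      and f2: "\<And>s t. ((\<lambda>t. f s t) has_real_derivative f2 s t) (at t)"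
      and f12: "\<And>s t. ((\<lambda>t. f1 s t) has_real_derivative f12 s t) (at t)"
      and f21: "\<And>s t. ((\<lambda>s. f2 s t) has_real_derivative f21 s t) (at s)"
      and c12: "continuous_on UNIV (\<lambda>p. f12 (fst p) (snd p))"
      and c21: "continuous_on UNIV (\<lambda>p. f21 (fst p) (snd p))"
  shows "f12 s0 t0 = f21 s0 t0"
proof (rule ccontr)
  assume ne: "f12 s0 t0 \<noteq> f21 s0 t0"
  define e where "e = \<bar>f12 s0 t0 - f21 s0 t0\<bar> / 2"
  have e: "e > 0"
    using ne by (simp add: e_def)
  obtain d1 where d1: "d1 > 0"
    "\<And>s t. \<bar>s - s0\<bar> < d1 \<Longrightarrow> \<bar>t - t0\<bar> < d1 \<Longrightarrow> \<bar>f12 s t - f12 s0 t0\<bar> < e"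
    using continuous_on_plane_eps_delta[OF c12 e] by blast
  obtain d2 where d2: "d2 > 0"
    "\<And>s t. \<bar>s - s0\<bar> < d2 \<Longrightarrow> \<bar>t - t0\<bar> < d2 \<Longrightarrow> \<bar>f21 s t - f21 s0 t0\<bar> < e"
    using continuous_on_plane_eps_delta[OF c21 e] by blast
  obtain \<xi> \<eta> \<xi>' \<eta>' where bounds:
    "\<bar>\<xi> - s0\<bar> < min d1 d2" "\<bar>\<eta> - t0\<bar> < min d1 d2"
    "\<bar>\<xi>' - s0\<bar> < min d1 d2" "\<bar>\<eta>' - t0\<bar> < min d1 d2"
    and eq: "f12 \<xi> \<eta> = f21 \<xi>' \<eta>'"
    by (rule mixed_difference_mvt[OF f1 f2 f12 f21, of "min d1 d2"]) (use d1 d2 in auto)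
  have "\<bar>f12 \<xi> \<eta> - f12 s0 t0\<bar> < e" "\<bar>f21 \<xi>' \<eta>' - f21 s0 t0\<bar> < e"
    using bounds d1(2) d2(2) by auto
  moreover have "f12 s0 t0 - f21 s0 t0 = (f21 \<xi>' \<eta>' - f21 s0 t0) - (f12 \<xi> \<eta> - f12 s0 t0)"
    using eq by simp
  then have "\<bar>f12 s0 t0 - f21 s0 t0\<bar>
      \<le> \<bar>f21 \<xi>' \<eta>' - f21 s0 t0\<bar> + \<bar>f12 \<xi> \<eta> - f12 s0 t0\<bar>"
    by (metis abs_triangle_ineq4)
  moreover have "\<bar>f12 s0 t0 - f21 s0 t0\<bar> = 2 * e"
    by (simp add: e_def)
  ultimately show False
    by linarith
qed

lemma smooth_cl_has_real_derivative:
  assumes F: "smooth_cl m F" and js: "set js \<subseteq> {0..m}" and k: "k \<in> {0..m}"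
  shows "((\<lambda>t. iterpd js F (y(k := t)) C) has_real_derivative iterpd (k # js) F y C) (at (y k))"
proof -
  have "(\<lambda>t. iterpd js F (y(k := t)) C) differentiable (at (y k))" by (rule smooth_cl_differentiable[OF F js k])
  then show ?thesis using DERIV_deriv_iff_real_differentiable by (simp add: iterpd_Cons pdx_def)
qed

lemma smooth_cl_continuous_on_plane:
  assumes "smooth_cl m F" and "set js \<subseteq> {0..m}"
  shows "continuous_on UNIV (\<lambda>p :: real \<times> real. iterpd js F (x(i := fst p, j := snd p)) C)"
proof -
  have "continuous_on UNIV (\<lambda>p :: real \<times> real. x(i := fst p, j := snd p))"
  proof (rule continuous_on_coordinatewise_then_product)
    fix k
    show "continuous_on UNIV (\<lambda>p :: real \<times> real. (x(i := fst p, j := snd p)) k)"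
      by (cases "k = j"; cases "k = i") (auto intro: continuous_intros)
  qed
  then show ?thesis
    using continuous_on_compose2[OF smooth_cl_continuous[OF assms]] by blast
qed

lemma pdx_commute:
  assumes F: "smooth_cl m F" and i: "i \<in> {0..m}" and j: "j \<in> {0..m}"
  shows "pdx j (pdx i F) = pdx i (pdx j F)"
proof (cases "i = j")
  case False
  show ?thesis
  proof (intro ext)
    fix x C
    (* Schwarz's theorem on the plane through x spanned by the coordinates i and j. *)
    let ?y = "\<lambda>(s::real) (t::real). x(i := s, j := t)"
    define f where "f s t = F (?y s t) C" for s t
    define f1 where "f1 s t = pdx i F (?y s t) C" for s t
    define f2 where "f2 s t = pdx j F (?y s t) C" for s t
    define f12 where "f12 s t = pdx j (pdx i F) (?y s t) C" for s t
    define f21 where "f21 s t = pdx i (pdx j F) (?y s t) C" for s t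
    have yi: "(?y s t)(i := \<sigma>) = ?y \<sigma> t" for s t \<sigma> using False by (simp add: fun_upd_twist)
    have yj: "(?y s t)(j := \<tau>) = ?y s \<tau>" for s t \<tau> by simp
    have yi': "?y s t i = s" for s t using False by simp
    have yj': "?y s t j = t" for s t by simp
    have d1: "((\<lambda>s. f s t) has_real_derivative f1 s t) (at s)" for s t
      using smooth_cl_has_real_derivative[OF F, of "[]" i "?y s t" C] i
      unfolding yi yi' by (simp add: f_def f1_def iterpd_Cons)
    have d2: "((\<lambda>t. f s t) has_real_derivative f2 s t) (at t)" for s t
      using smooth_cl_has_real_derivative[OF F, of "[]" j "?y s t" C] j
      unfolding yj yj' by (simp add: f_def f2_def iterpd_Cons)
    have d12: "((\<lambda>t. f1 s t) has_real_derivative f12 s t) (at t)" for s t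
      using smooth_cl_has_real_derivative[OF F, of "[i]" j "?y s t" C] i j
      unfolding yj yj' by (simp add: f1_def f12_def iterpd_Cons)
    have d21: "((\<lambda>s. f2 s t) has_real_derivative f21 s t) (at s)" for s t
      using smooth_cl_has_real_derivative[OF F, of "[j]" i "?y s t" C] i j
      unfolding yi yi' by (simp add: f2_def f21_def iterpd_Cons)
    have c12: "continuous_on UNIV (\<lambda>p. f12 (fst p) (snd p))"
      using smooth_cl_continuous_on_plane[OF F, of "[j, i]"] i j by (simp add: f12_def iterpd_Cons)
    have c21: "continuous_on UNIV (\<lambda>p. f21 (fst p) (snd p))"
      using smooth_cl_continuous_on_plane[OF F, of "[i, j]"] i j by (simp add: f21_def iterpd_Cons)
    have "f12 (x i) (x j) = f21 (x i) (x j)"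
      by (rule mixed_partials_eq[OF d1 d2 d12 d21 c12 c21])
    then show "pdx j (pdx i F) x C = pdx i (pdx j F) x C" by (simp add: f12_def f21_def)
  qed
qed simp

lemma cl_valued_pdx: "(\<And>x. cl_valued m (F x)) \<Longrightarrow> cl_valued m (pdx j F x)"
  unfolding cl_valued_def pdx_def by simp

section \<open>The Dirac operator in y\<close>

lemma dirac_y_formula:
  "dirac_y m F = (\<lambda>x C. \<Sum>j\<in>{2..m}.
      (if C \<subseteq> {1..m} then basis_sign j C else 0) * pdx j F x (symd {j} C))"
  by (rule ext, rule ext) (auto simp: dirac_y_def clmul_basis intro!: sum.cong)

lemma dirac_y_eq_sum: "dirac_y m F x = (\<Sum>j\<in>{2..m}. clmul m (basis j) (pdx j F x))"
  by (simp add: dirac_y_def fun_eq_iff sum_fun_apply)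

lemma smooth_cl_dirac_y: "smooth_cl m F \<Longrightarrow> smooth_cl m (dirac_y m F)"
  unfolding dirac_y_formula by (rule smooth_cl_lincomb) (auto intro: smooth_cl_pdx)

lemma dirac_y_add:
  "smooth_cl m F \<Longrightarrow> smooth_cl m G \<Longrightarrow> dirac_y m (F + G) = dirac_y m F + dirac_y m G"
  unfolding dirac_y_formula by (auto simp: fun_eq_iff pdx_add sum.distrib algebra_simps)

lemma dirac_y_scaleR: "smooth_cl m F \<Longrightarrow> dirac_y m (c *\<^sub>R F) = c *\<^sub>R dirac_y m F"
  unfolding dirac_y_formula by (auto simp: fun_eq_iff pdx_scaleR sum_distrib_left algebra_simps)

lemma depends_only_dirac_y:
  assumes "depends_only {2..m} F"
  shows "depends_only {2..m} (dirac_y m F)"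
proof (unfold depends_only_def, intro allI impI)
  fix x x' :: point assume xx': "\<forall>j\<in>{2..m}. x j = x' j"
  have "pdx j F x = pdx j F x'" if "j \<in> {2..m}" for j
    using depends_only_pdx[OF assms that] xx' by (simp add: depends_only_def)
  then show "dirac_y m F x = dirac_y m F x'"
    by (simp add: dirac_y_def)
qed

definition smooth_y :: "nat \<Rightarrow> (point \<Rightarrow> mvec) set" where
  "smooth_y m = {F. smooth_cl m F \<and> (\<forall>x. cl_valued m (F x)) \<and> depends_only {2..m} F}"

lemma subspace_endo_dirac_y: "subspace_endo (smooth_y m) (dirac_y m)"
proof
  have "depends_only {2..m} (0 :: point \<Rightarrow> mvec)"
    by (simp add: depends_only_def)
  then show "subspace (smooth_y m)"
    unfolding subspace_def smooth_y_def
    by (auto simp: smooth_cl_zero smooth_cl_add smooth_cl_scaleR depends_only_add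
        depends_only_scaleR cl_valued_def)
next
  fix F assume "F \<in> smooth_y m"
  moreover have "cl_valued m (dirac_y m F x)" for x
    by (simp add: cl_valued_def dirac_y_formula)
  ultimately show "dirac_y m F \<in> smooth_y m"
    by (simp add: smooth_y_def smooth_cl_dirac_y depends_only_dirac_y)
next
  fix F G assume "F \<in> smooth_y m" "G \<in> smooth_y m"
  then show "dirac_y m (F + G) = dirac_y m F + dirac_y m G"
    by (simp add: smooth_y_def dirac_y_add)
next
  fix F and c :: real assume "F \<in> smooth_y m"
  then show "dirac_y m (c *\<^sub>R F) = c *\<^sub>R dirac_y m F"
    by (simp add: smooth_y_def dirac_y_scaleR)
qed

global_interpretation Dy: subspace_endo "smooth_y m" "dirac_y m" for m
  by (rule subspace_endo_dirac_y)

lemma sum_sum_antisymmetric: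
  fixes T :: "'a \<Rightarrow> 'a \<Rightarrow> real"
  assumes "\<And>i j. i \<in> I \<Longrightarrow> j \<in> I \<Longrightarrow> i \<noteq> j \<Longrightarrow> T i j = - T j i"
    and "finite I"
  shows "(\<Sum>i\<in>I. \<Sum>j\<in>I. T i j) = (\<Sum>i\<in>I. T i i)"
proof -
  define S where "S = (\<Sum>i\<in>I. \<Sum>j\<in>I. if i = j then 0 else T i j)"
  have "S = (\<Sum>j\<in>I. \<Sum>i\<in>I. if i = j then 0 else T i j)"
    unfolding S_def by (rule sum.swap)
  also have "\<dots> = (\<Sum>j\<in>I. \<Sum>i\<in>I. - (if j = i then 0 else T j i))"
  proof (intro sum.cong refl)
    fix i j assume "i \<in> I" "j \<in> I"
    then show "(if i = j then 0 else T i j) = - (if j = i then 0 else T j i)"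
      using assms(1)[of i j] by (cases "i = j") simp_all
  qed
  also have "\<dots> = - S"
    by (simp add: S_def sum_negf)
  finally have "S = 0" by simp
  have "(\<Sum>i\<in>I. \<Sum>j\<in>I. T i j)
      = (\<Sum>i\<in>I. \<Sum>j\<in>I. (if i = j then T i i else 0) + (if i = j then 0 else T i j))"
    by (intro sum.cong refl) auto
  also have "\<dots> = (\<Sum>i\<in>I. T i i) + S"
    using \<open>finite I\<close> by (simp add: sum.distrib S_def)
  finally show ?thesis using \<open>S = 0\<close> by simp
qed

lemma pdx_dirac_y:
  assumes F: "smooth_cl m F" and i: "i \<in> {0..m}"
  shows "pdx i (dirac_y m F) x = (\<Sum>j\<in>{2..m}. clmul m (basis j) (pdx i (pdx j F) x))"
proof -
  have "pdx i (dirac_y m F) = iterpd [i] (\<lambda>x C. \<Sum>j\<in>{2..m}.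
      (if C \<subseteq> {1..m} then basis_sign j C else 0) * pdx j F x (symd {j} C))"
    by (simp add: iterpd_Cons dirac_y_formula)
  also have "\<dots> = (\<lambda>x C. \<Sum>j\<in>{2..m}.
      (if C \<subseteq> {1..m} then basis_sign j C else 0) * iterpd [i] (pdx j F) x (symd {j} C))"
    by (rule iterpd_lincomb) (use i F in \<open>auto intro: smooth_cl_pdx\<close>)
  finally show ?thesis
    by (auto simp: fun_eq_iff sum_fun_apply clmul_basis iterpd_Cons intro!: sum.cong)
qed

lemma lap_eq_minus_dirac_y_square:
  assumes F: "F \<in> smooth_y m"
  shows "lap m F = - dirac_y m (dirac_y m F)"
proof (intro ext)
  fix x C
  have Fs: "smooth_cl m F" and Fc: "\<And>x. cl_valued m (F x)"
    using F by (auto simp: smooth_y_def)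
  let ?I = "{2..m}"
  define T where "T i j = clmul m (basis i) (clmul m (basis j) (pdx i (pdx j F) x)) C" for i j
  have "dirac_y m (dirac_y m F) x C = (\<Sum>i\<in>?I. clmul m (basis i) (pdx i (dirac_y m F) x) C)"
    by (simp only: dirac_y_def[of m "dirac_y m F"])
  also have "\<dots> = (\<Sum>i\<in>?I. \<Sum>j\<in>?I. T i j)"
    using Fs by (simp add: pdx_dirac_y clmul_sum_right sum_fun_apply T_def)
  also have "\<dots> = (\<Sum>i\<in>?I. T i i)"
  proof (rule sum_sum_antisymmetric)
    fix i j assume ij: "i \<in> ?I" "j \<in> ?I" "i \<noteq> j"
    then have "pdx j (pdx i F) = pdx i (pdx j F)"
      by (intro pdx_commute[OF Fs]) auto
    with ij show "T i j = - T j i"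
      using clmul_basis_basis_anticommute[of i m j] by (simp add: T_def)
  qed simp
  also have "\<dots> = - (\<Sum>i\<in>?I. pdx i (pdx i F) x C)"
  proof -
    have "T i i = - pdx i (pdx i F) x C" if i: "i \<in> ?I" for i
    proof (cases "C \<subseteq> {1..m}")
      case False
      have "cl_valued m (pdx i (pdx i F) x)" by (intro cl_valued_pdx Fc)
      with False i show ?thesis by (simp add: T_def clmul_basis cl_valued_def)
    qed (use clmul_basis_basis_same[of i m C] i in \<open>simp add: T_def\<close>)
    then show ?thesis by (simp add: sum_negf)
  qed
  finally show "lap m F x C = (- dirac_y m (dirac_y m F)) x C"
    by (simp add: lap_def)
qed

lemma lap_power_eq_poly_op:
  assumes F: "F \<in> smooth_y m"
  shows "(lap m ^^ k) F = Dy.poly_op m ((- (pX ^ 2)) ^ k) F"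
proof (induction k)
  case (Suc k)
  let ?H = "Dy.poly_op m ((- (pX ^ 2)) ^ k) F"
  have H: "?H \<in> smooth_y m" by (rule Dy.poly_op_in[OF F])
  have "(lap m ^^ Suc k) F = - dirac_y m (dirac_y m ?H)"
    using Suc lap_eq_minus_dirac_y_square[OF H] by simp
  also have "\<dots> = Dy.poly_op m (- (pX ^ 2)) ?H"
    by (rule Dy.poly_op_minus_X_square[OF H, symmetric])
  also have "\<dots> = Dy.poly_op m ((- (pX ^ 2)) ^ Suc k) F"
    by (simp only: power_Suc Dy.poly_op_mult[OF F])
  finally show ?case .
qed simp

section \<open>The exponential ansatz\<close>

definition ansatz :: "nat \<Rightarrow> (point \<Rightarrow> mvec) \<Rightarrow> (point \<Rightarrow> mvec) \<Rightarrow> point \<Rightarrow> mvec" where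
  "ansatz m P Q x = clmul m (exp_z x) (P x) + clmul m (exp_zbar x) (Q x)"

lemma ansatz_apply:
  assumes "1 \<le> m"
  shows "ansatz m P Q x C = (if C \<subseteq> {1..m} then
      exp (x 0) * cos (x 1) * (P x C + Q x C)
      + exp (x 0) * sin (x 1) * (basis_sign 1 C * (P x (symd {1} C) - Q x (symd {1} C))) else 0)"
  using assms by (simp add: ansatz_def exp_z_eq exp_zbar_eq clmul_cplx_mvec algebra_simps)

lemma pdx_0_ansatz:
  assumes m: "1 \<le> m" and P: "depends_only {2..m} P" and Q: "depends_only {2..m} Q"
  shows "pdx 0 (ansatz m P Q) x C = ansatz m P Q x C"
proof -
  define K where "K = (if C \<subseteq> {1..m} then cos (x 1) * (P x C + Q x C)
      + sin (x 1) * (basis_sign 1 C * (P x (symd {1} C) - Q x (symd {1} C))) else 0)"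
  have e: "ansatz m P Q (x(0 := t)) C = exp t * K" for t
    using m depends_only_upd[OF P, of 0 x t] depends_only_upd[OF Q, of 0 x t]
    by (simp add: ansatz_apply K_def algebra_simps)
  have "((\<lambda>t. exp t * K) has_real_derivative exp (x 0) * K) (at (x 0))"
    by (auto intro!: derivative_eq_intros)
  then have "deriv (\<lambda>t. ansatz m P Q (x(0 := t)) C) (x 0) = exp (x 0) * K"
    unfolding e by (rule DERIV_imp_deriv)
  moreover have "ansatz m P Q x C = exp (x 0) * K"
    using e[of "x 0"] by simp
  ultimately show ?thesis by (simp add: pdx_def)
qed

lemma pdx_1_ansatz:
  assumes m: "1 \<le> m" and P: "depends_only {2..m} P" and Q: "depends_only {2..m} Q"
  shows "pdx 1 (ansatz m P Q) x C = (if C \<subseteq> {1..m} then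
      - exp (x 0) * sin (x 1) * (P x C + Q x C)
      + exp (x 0) * cos (x 1) * (basis_sign 1 C * (P x (symd {1} C) - Q x (symd {1} C))) else 0)"
proof -
  define U where "U = P x C + Q x C"
  define W where "W = basis_sign 1 C * (P x (symd {1} C) - Q x (symd {1} C))"
  define c where "c = (if C \<subseteq> {1..m} then 1 else (0::real))"
  have e: "ansatz m P Q (x(1 := t)) C = c * (exp (x 0) * cos t * U + exp (x 0) * sin t * W)" for t
    using m depends_only_upd[OF P, of 1 x t] depends_only_upd[OF Q, of 1 x t]
    by (simp add: ansatz_apply U_def W_def c_def)
  have "((\<lambda>t. c * (exp (x 0) * cos t * U + exp (x 0) * sin t * W)) has_real_derivative
       c * (- exp (x 0) * sin (x 1) * U + exp (x 0) * cos (x 1) * W)) (at (x 1))"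
    by (auto intro!: derivative_eq_intros simp: algebra_simps)
  then have "deriv (\<lambda>t. ansatz m P Q (x(1 := t)) C) (x 1)
      = c * (- exp (x 0) * sin (x 1) * U + exp (x 0) * cos (x 1) * W)"
    unfolding e by (rule DERIV_imp_deriv)
  then show ?thesis by (simp add: pdx_def c_def U_def W_def)
qed

lemma pdx_ansatz:
  assumes m: "1 \<le> m" and j: "j \<in> {2..m}"
    and P: "\<And>x C. (\<lambda>t. P (x(j := t)) C) differentiable (at (x j))"
    and Q: "\<And>x C. (\<lambda>t. Q (x(j := t)) C) differentiable (at (x j))"
  shows "pdx j (ansatz m P Q) = ansatz m (pdx j P) (pdx j Q)"
proof (intro ext)
  fix x C
  have j0: "j \<noteq> 0" "j \<noteq> 1" using j by auto
  have dP: "((\<lambda>t. P (x(j := t)) D) has_real_derivative pdx j P x D) (at (x j))" for D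
    using P[of x D] DERIV_deriv_iff_real_differentiable by (simp add: pdx_def)
  have dQ: "((\<lambda>t. Q (x(j := t)) D) has_real_derivative pdx j Q x D) (at (x j))" for D
    using Q[of x D] DERIV_deriv_iff_real_differentiable by (simp add: pdx_def)
  define c where "c = (if C \<subseteq> {1..m} then 1 else (0::real))"
  let ?a = "exp (x 0) * cos (x 1)" and ?b = "exp (x 0) * sin (x 1)"
  have e: "ansatz m P Q (x(j := t)) C = c * (?a * (P (x(j := t)) C + Q (x(j := t)) C)
      + ?b * (basis_sign 1 C * (P (x(j := t)) (symd {1} C) - Q (x(j := t)) (symd {1} C))))" for t
    using m j0 by (simp add: ansatz_apply c_def)
  have "((\<lambda>t. c * (?a * (P (x(j := t)) C + Q (x(j := t)) C)
      + ?b * (basis_sign 1 C * (P (x(j := t)) (symd {1} C) - Q (x(j := t)) (symd {1} C)))))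
     has_real_derivative c * (?a * (pdx j P x C + pdx j Q x C)
      + ?b * (basis_sign 1 C * (pdx j P x (symd {1} C) - pdx j Q x (symd {1} C))))) (at (x j))"
    by (intro DERIV_cmult DERIV_add DERIV_diff dP dQ)
  then have "deriv (\<lambda>t. ansatz m P Q (x(j := t)) C) (x j) = c * (?a * (pdx j P x C + pdx j Q x C)
      + ?b * (basis_sign 1 C * (pdx j P x (symd {1} C) - pdx j Q x (symd {1} C))))"
    unfolding e by (rule DERIV_imp_deriv)
  then show "pdx j (ansatz m P Q) x C = ansatz m (pdx j P) (pdx j Q) x C"
    using m by (simp add: pdx_def ansatz_apply c_def)
qed

lemma clmul_basis_exp_z:
  "j \<in> {2..m} \<Longrightarrow>
    clmul m (basis j) (clmul m (exp_z x) u) = clmul m (exp_zbar x) (clmul m (basis j) u)"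
  using clmul_basis_cplx_mvec[of j m] by (auto simp: exp_z_eq exp_zbar_eq)

lemma clmul_basis_exp_zbar:
  "j \<in> {2..m} \<Longrightarrow>
    clmul m (basis j) (clmul m (exp_zbar x) u) = clmul m (exp_z x) (clmul m (basis j) u)"
  using clmul_basis_cplx_mvec[of j m "exp (x 0) * cos (x 1)" "- (exp (x 0) * sin (x 1))"]
  by (auto simp: exp_z_eq exp_zbar_eq)

lemma dirac_x01_ansatz:
  assumes m: "1 \<le> m" and P: "depends_only {2..m} P" and Q: "depends_only {2..m} Q"
  shows "pdx 0 (ansatz m P Q) x C + clmul m (basis 1) (pdx 1 (ansatz m P Q) x) C
       = 2 * clmul m (exp_zbar x) (Q x) C"
proof (cases "C \<subseteq> {1..m}")
  case True
  have one: "1 \<in> {1..m}" and C1: "symd {1} C \<subseteq> {1..m}"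
    using True m symd_subset by auto
  have e1: "clmul m (basis 1) (pdx 1 (ansatz m P Q) x) C
      = basis_sign 1 C * pdx 1 (ansatz m P Q) x (symd {1} C)"
    using True one by (simp only: clmul_basis if_True)
  have e2: "pdx 1 (ansatz m P Q) x (symd {1} C)
      = - exp (x 0) * sin (x 1) * (P x (symd {1} C) + Q x (symd {1} C))
        + exp (x 0) * cos (x 1) * (basis_sign 1 (symd {1} C) * (P x C - Q x C))"
    using C1 by (simp only: pdx_1_ansatz[OF m P Q] if_True symd_symd)
  have e3: "ansatz m P Q x C = exp (x 0) * cos (x 1) * (P x C + Q x C)
      + exp (x 0) * sin (x 1) * (basis_sign 1 C * (P x (symd {1} C) - Q x (symd {1} C)))"
    using True m by (simp only: ansatz_apply if_True)
  have e4: "clmul m (exp_zbar x) (Q x) C = exp (x 0) * cos (x 1) * Q x C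
      + - (exp (x 0) * sin (x 1)) * basis_sign 1 C * Q x (symd {1} C)"
    using True m by (simp only: exp_zbar_eq clmul_cplx_mvec if_True)
  show ?thesis
    unfolding pdx_0_ansatz[OF m P Q] e1 e2 e3 e4 basis_sign_symd_same
    using basis_sign_cases[of 1 C] by (auto simp: algebra_simps)
next
  case False
  with m show ?thesis
    by (simp add: pdx_0_ansatz[OF m P Q] ansatz_apply clmul_basis exp_zbar_eq clmul_cplx_mvec)
qed

(* For j >= 2, e_j anticommutes with e_1 and hence swaps exp z and exp zbar. *)

lemma dirac_y_part_ansatz:
  assumes P: "smooth_cl m P" and Q: "smooth_cl m Q"
  shows "(\<Sum>j\<in>{2..m}. clmul m (basis j) (pdx j (ansatz m P Q) x))
    = ansatz m (dirac_y m Q) (dirac_y m P) x"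
proof -
  have "clmul m (basis j) (pdx j (ansatz m P Q) x)
      = clmul m (exp_zbar x) (clmul m (basis j) (pdx j P x))
        + clmul m (exp_z x) (clmul m (basis j) (pdx j Q x))" if j: "j \<in> {2..m}" for j
  proof -
    have "pdx j (ansatz m P Q) = ansatz m (pdx j P) (pdx j Q)"
      using j smooth_cl_differentiable[OF P, of "[]" j] smooth_cl_differentiable[OF Q, of "[]" j]
      by (intro pdx_ansatz) auto
    with j show ?thesis
      by (simp add: ansatz_def clmul_add_right clmul_basis_exp_z clmul_basis_exp_zbar)
  qed
  then show ?thesis
    by (simp add: ansatz_def dirac_y_eq_sum clmul_sum_right sum.distrib add.commute)
qed

lemma dirac_ansatz:
  assumes m: "1 \<le> m" and P: "P \<in> smooth_y m" and Q: "Q \<in> smooth_y m"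
  shows "dirac m (ansatz m P Q) = ansatz m (dirac_y m Q) (dirac_y m P + 2 *\<^sub>R Q)"
proof (intro ext)
  fix x C
  have "{1..m} = insert 1 {2..m}" using m by auto
  then have "dirac m (ansatz m P Q) x C
      = pdx 0 (ansatz m P Q) x C + clmul m (basis 1) (pdx 1 (ansatz m P Q) x) C
        + (\<Sum>j\<in>{2..m}. clmul m (basis j) (pdx j (ansatz m P Q) x)) C"
    by (simp add: dirac_def sum_fun_apply)
  also have "\<dots> = ansatz m (dirac_y m Q) (dirac_y m P + 2 *\<^sub>R Q) x C"
    using P Q dirac_x01_ansatz[OF m, of P Q x C]
    by (simp add: smooth_y_def dirac_y_part_ansatz)
      (simp add: ansatz_def clmul_add_right clmul_scaleR_right)
  finally show "dirac m (ansatz m P Q) x C = ansatz m (dirac_y m Q) (dirac_y m P + 2 *\<^sub>R Q) x C" .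
qed

lemma dirac_power_ansatz:
  assumes m: "1 \<le> m"
  shows "P \<in> smooth_y m \<Longrightarrow> Q \<in> smooth_y m
    \<Longrightarrow> (dirac m ^^ k) (ansatz m P Q) = case_prod (ansatz m) ((Dy.ansatz_step m ^^ k) (P, Q))"
proof (induction k arbitrary: P Q)
  case (Suc k)
  have "dirac_y m Q \<in> smooth_y m" "dirac_y m P + 2 *\<^sub>R Q \<in> smooth_y m"
    using Suc.prems by (auto intro: Dy.D_in subspace_add subspace_mul Dy.subspace)
  then show ?case
    using Suc.IH dirac_ansatz[OF m Suc.prems]
    by (simp add: funpow_Suc_right Dy.ansatz_step_def del: funpow.simps)
qed simp

(* Evaluation at x1 = 0 gives P + Q = 0, at x1 = pi/2 (and the blade symd {1} C) P - Q = 0. *)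

lemma ansatz_eq_0_iff:
  assumes m: "1 \<le> m" and P: "P \<in> smooth_y m" and Q: "Q \<in> smooth_y m"
  shows "(\<forall>x. ansatz m P Q x = (\<lambda>C. 0)) \<longleftrightarrow> P = 0 \<and> Q = 0"
proof
  assume "P = 0 \<and> Q = 0"
  then show "\<forall>x. ansatz m P Q x = (\<lambda>C. 0)" using m by (auto simp: ansatz_apply)
next
  assume Z: "\<forall>x. ansatz m P Q x = (\<lambda>C. 0)"
  have Pd: "depends_only {2..m} P" and Qd: "depends_only {2..m} Q"
    and Pc: "\<And>x. cl_valued m (P x)" and Qc: "\<And>x. cl_valued m (Q x)"
    using P Q by (auto simp: smooth_y_def)
  have both: "P y C = 0 \<and> Q y C = 0" for y C
  proof (cases "C \<subseteq> {1..m}")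
    case False
    then show ?thesis using Pc Qc by (simp add: cl_valued_def)
  next
    case True
    define x0 where "x0 = y(0 := 0, 1 := 0)"
    define x1 where "x1 = y(0 := 0, 1 := pi / 2)"
    have Px0: "P x0 = P y" "Q x0 = Q y" unfolding x0_def
      using depends_only_upd[OF Pd] depends_only_upd[OF Qd] by auto
    have Px1: "P x1 = P y" "Q x1 = Q y" unfolding x1_def
      using depends_only_upd[OF Pd] depends_only_upd[OF Qd] by auto
    have "ansatz m P Q x0 C = 0" using Z by simp
    then have s: "P y C + Q y C = 0" using True m Px0 by (simp add: ansatz_apply x0_def)
    have C1: "symd {1} C \<subseteq> {1..m}" using True m symd_subset by auto
    have "ansatz m P Q x1 (symd {1} C) = 0" using Z by simp
    then have "basis_sign 1 (symd {1} C) * (P y C - Q y C) = 0"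
      using C1 m Px1 by (simp add: ansatz_apply x1_def)
    moreover have "basis_sign 1 (symd {1} C) \<noteq> 0"
      using basis_sign_cases[of 1 "symd {1} C"] by auto
    ultimately have "P y C = Q y C" by simp
    then show ?thesis using s by simp
  qed
  then show "P = 0 \<and> Q = 0" by (auto simp: fun_eq_iff)
qed

theorem theorem4:
  fixes m n :: nat and A B :: "point \<Rightarrow> mvec"
  assumes "m \<ge> 2" and "n \<ge> 1"
    and "\<forall>x. cl_valued m (A x)" and "\<forall>x. cl_valued m (B x)"
    and "smooth_cl m A" and "smooth_cl m B"
    and "depends_only {2..m} A" and "depends_only {2..m} B"
  shows "(\<forall>x. (dirac m ^^ n)
              (\<lambda>x. cladd (clmul m (exp_z x) (A x)) (clmul m (exp_zbar x) (B x))) x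
            = (\<lambda>C. 0))
     \<longleftrightarrow> ((\<forall>x. (lap m ^^ n) A x = (\<lambda>C. 0)) \<and>
          (\<forall>x. B x = (\<lambda>C. \<Sum>k = 1..n. cc k * (dirac_y m ^^ (2 * k - 1)) A x C)))"
proof -
  have m: "1 \<le> m" using assms(1) by simp
  have A: "A \<in> smooth_y m" and B: "B \<in> smooth_y m"
    using assms by (simp_all add: smooth_y_def)
  obtain P Q where PQ: "(Dy.ansatz_step m ^^ n) (A, B) = (P, Q)"
    by (cases "(Dy.ansatz_step m ^^ n) (A, B)")
  have "P \<in> smooth_y m" "Q \<in> smooth_y m"
    using Dy.ansatz_step_power_in[OF A B, of n] PQ by auto
  then have "(\<forall>x. (dirac m ^^ n) (ansatz m A B) x = (\<lambda>C. 0))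
      \<longleftrightarrow> (Dy.ansatz_step m ^^ n) (A, B) = (0, 0)"
    using dirac_power_ansatz[OF m A B, of n] ansatz_eq_0_iff[OF m] PQ by simp
  also have "\<dots> \<longleftrightarrow> Dy.poly_op m (pX ^ (2 * n)) A = 0 \<and> B = Dy.poly_op m (odd_cc_poly n) A"
    by (rule Dy.ansatz_step_power_eq_0_iff[OF A B])
  also have "Dy.poly_op m (pX ^ (2 * n)) A = 0 \<longleftrightarrow> (lap m ^^ n) A = 0"
    by (simp add: lap_power_eq_poly_op[OF A] Dy.poly_op_minus_X_square_power)
  also have "Dy.poly_op m (odd_cc_poly n) A = (\<Sum>k = 1..n. cc k *\<^sub>R (dirac_y m ^^ (2 * k - 1)) A)"
    by (simp add: odd_cc_poly_def Dy.poly_op_sum_poly Dy.poly_op_monom)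
  finally show ?thesis
    by (simp add: ansatz_def cladd_def fun_eq_iff sum_fun_apply)
qed

end
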